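(* Let $\mathcal T$ be a tree grammar and let $\varphi(x_1,\ldots,x_\ell)$ be a quantifier-free type over the Simon vocabulary that is satisfied by some tuple of nodes in some tree of $\mathcal T$. There is a subset $X\subseteq\{x_1,\ldots,x_\ell\}$ such that: (1) for every $t\in\mathcal T$, any two tuples of nodes of $t$ satisfying $\varphi$ that agree on the variables in $X$ are equal; and (2) with $k=|X|$, the growth rate of $\varphi$, i.e. the function mapping $n\ge1$ to the maximal number of tuples satisfying $\varphi$ in a tree of $\mathcal T$ with at most $n$ nodes, is $\Theta(n^k)$.
   Context: Trees are finite, node-labelled, sibling-ordered. Simon representation: universe = nodes, a constant for the root, unary partial function parent (undefined at the root), unary label predicates, unary predicates “leftmost sibling” and “rightmost sibling”, binary relation sibling order (reflexive–transitive closure of sibling successor) and binary relation sibling successor; atomic formulas containing undefined terms are false. A tree grammar consists of a finite label set with a distinguished root label and rules of the forms $a\to$, $a\to b$, $a\to bc$, $a\to b^*$ (no children / one child labelled $b$ / two children labelled $b,c$ / any finite sequence of children labelled $b$), acyclic in the sense that some preorder makes the left-hand letter strictly bigger than all right-hand letters; $\mathcal T$ is the set of trees it generates. A quantifier-free type is a quantifier-free formula $\varphi(x_1,\ldots,x_\ell)$ such that every quantifier-free formula in the same free variables is either implied by $\varphi$ or inconsistent with it (over trees of $\mathcal T$). *)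

theory Defs
  imports Main "HOL-Library.Landau_Symbols"
begin

datatype 'a ltree = Nd 'a "'a ltree list"

fun root_lab :: "'a ltree \<Rightarrow> 'a" where
  "root_lab (Nd a ts) = a"

fun kids :: "'a ltree \<Rightarrow> 'a ltree list" where
  "kids (Nd a ts) = ts"

text \<open>Nodes are addressed by positions (Dewey paths): the root is [], and the
  i-th child (0-based) of node p is p @ [i].\<close>

function subt :: "'a ltree \<Rightarrow> nat list \<Rightarrow> 'a ltree option" where
  "subt t [] = Some t"
| "subt (Nd a ts) (i # p) = (if i < length ts then subt (ts ! i) p else None)"
  by pat_completeness auto
termination
  by (relation "measure (\<lambda>(t, p). size t)")
     (auto simp: less_Suc_eq_le intro!: size_list_estimation' nth_mem)

definition nodes :: "'a ltree \<Rightarrow> nat list set" where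
  "nodes t = {p. subt t p \<noteq> None}"

definition lab :: "'a ltree \<Rightarrow> nat list \<Rightarrow> 'a option" where
  "lab t p = map_option root_lab (subt t p)"

definition nchildren :: "'a ltree \<Rightarrow> nat list \<Rightarrow> nat" where
  "nchildren t p = (case subt t p of Some s \<Rightarrow> length (kids s) | None \<Rightarrow> 0)"

definition leftmost :: "'a ltree \<Rightarrow> nat list \<Rightarrow> bool" where
  "leftmost t p \<longleftrightarrow> p \<in> nodes t \<and> (p = [] \<or> last p = 0)"

definition rightmost :: "'a ltree \<Rightarrow> nat list \<Rightarrow> bool" where
  "rightmost t p \<longleftrightarrow> p \<in> nodes t \<and> (p = [] \<or> Suc (last p) = nchildren t (butlast p))"

definition sib_succ :: "'a ltree \<Rightarrow> nat list \<Rightarrow> nat list \<Rightarrow> bool" where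
  "sib_succ t p q \<longleftrightarrow> p \<in> nodes t \<and> q \<in> nodes t \<and> p \<noteq> [] \<and> q \<noteq> [] \<and>
     butlast p = butlast q \<and> last q = Suc (last p)"

text \<open>Sibling order = reflexive-transitive closure of sibling successor (on nodes).\<close>
definition sib_le :: "'a ltree \<Rightarrow> nat list \<Rightarrow> nat list \<Rightarrow> bool" where
  "sib_le t p q \<longleftrightarrow> p \<in> nodes t \<and> q \<in> nodes t \<and>
     (p = q \<or> (p \<noteq> [] \<and> q \<noteq> [] \<and> butlast p = butlast q \<and> last p \<le> last q))"

datatype trm = Var nat | Root | Par trm

datatype 'a qf =
    FTrue
  | Eq trm trm
  | Lab 'a trm
  | LeftM trm
  | RightM trm
  | SibLe trm trm
  | SibSucc trm trm
  | Neg "'a qf"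
  | Conj "'a qf" "'a qf"

fun trm_vars :: "trm \<Rightarrow> nat set" where
  "trm_vars (Var i) = {i}"
| "trm_vars Root = {}"
| "trm_vars (Par s) = trm_vars s"

fun qf_vars :: "'a qf \<Rightarrow> nat set" where
  "qf_vars FTrue = {}"
| "qf_vars (Eq s u) = trm_vars s \<union> trm_vars u"
| "qf_vars (Lab a s) = trm_vars s"
| "qf_vars (LeftM s) = trm_vars s"
| "qf_vars (RightM s) = trm_vars s"
| "qf_vars (SibLe s u) = trm_vars s \<union> trm_vars u"
| "qf_vars (SibSucc s u) = trm_vars s \<union> trm_vars u"
| "qf_vars (Neg f) = qf_vars f"
| "qf_vars (Conj f g) = qf_vars f \<union> qf_vars g"

text \<open>Term evaluation under an assignment vs (variable x_(i+1) is vs ! i);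
  None = undefined (parent of the root).\<close>
fun ev :: "nat list list \<Rightarrow> trm \<Rightarrow> nat list option" where
  "ev vs (Var i) = (if i < length vs then Some (vs ! i) else None)"
| "ev vs Root = Some []"
| "ev vs (Par s) = (case ev vs s of None \<Rightarrow> None
                     | Some p \<Rightarrow> if p = [] then None else Some (butlast p))"

fun ev2 :: "nat list list \<Rightarrow> trm \<Rightarrow> trm \<Rightarrow> (nat list \<Rightarrow> nat list \<Rightarrow> bool) \<Rightarrow> bool" where
  "ev2 vs s u R = (case (ev vs s, ev vs u) of (Some p, Some q) \<Rightarrow> R p q | _ \<Rightarrow> False)"

fun ev1 :: "nat list list \<Rightarrow> trm \<Rightarrow> (nat list \<Rightarrow> bool) \<Rightarrow> bool" where
  "ev1 vs s P = (case ev vs s of Some p \<Rightarrow> P p | None \<Rightarrow> False)"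

text \<open>Atomic formulas containing undefined terms are false.\<close>
fun sat :: "'a ltree \<Rightarrow> nat list list \<Rightarrow> 'a qf \<Rightarrow> bool" where
  "sat t vs FTrue = True"
| "sat t vs (Eq s u) = ev2 vs s u (\<lambda>p q. p = q)"
| "sat t vs (Lab a s) = ev1 vs s (\<lambda>p. lab t p = Some a)"
| "sat t vs (LeftM s) = ev1 vs s (leftmost t)"
| "sat t vs (RightM s) = ev1 vs s (rightmost t)"
| "sat t vs (SibLe s u) = ev2 vs s u (sib_le t)"
| "sat t vs (SibSucc s u) = ev2 vs s u (sib_succ t)"
| "sat t vs (Neg f) = (\<not> sat t vs f)"
| "sat t vs (Conj f g) = (sat t vs f \<and> sat t vs g)"

definition tuples :: "'a ltree \<Rightarrow> nat \<Rightarrow> nat list list set" where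
  "tuples t l = {vs. length vs = l \<and> set vs \<subseteq> nodes t}"

datatype 'a rule = Leaf 'a | Unary 'a 'a | Binary 'a 'a 'a | Star 'a 'a

fun lhs :: "'a rule \<Rightarrow> 'a" where
  "lhs (Leaf a) = a" | "lhs (Unary a b) = a" | "lhs (Binary a b c) = a" | "lhs (Star a b) = a"

fun rhs :: "'a rule \<Rightarrow> 'a set" where
  "rhs (Leaf a) = {}" | "rhs (Unary a b) = {b}" | "rhs (Binary a b c) = {b, c}" | "rhs (Star a b) = {b}"

definition tree_grammar :: "'a set \<Rightarrow> 'a \<Rightarrow> 'a rule set \<Rightarrow> bool" where
  "tree_grammar \<Sigma> r R \<longleftrightarrow> finite \<Sigma> \<and> r \<in> \<Sigma> \<and>
     (\<forall>\<rho>\<in>R. lhs \<rho> \<in> \<Sigma> \<and> rhs \<rho> \<subseteq> \<Sigma>) \<and>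
     (\<exists>le :: 'a \<Rightarrow> 'a \<Rightarrow> bool.
        (\<forall>a\<in>\<Sigma>. le a a) \<and> (\<forall>a\<in>\<Sigma>. \<forall>b\<in>\<Sigma>. \<forall>c\<in>\<Sigma>. le a b \<longrightarrow> le b c \<longrightarrow> le a c) \<and>
        (\<forall>\<rho>\<in>R. \<forall>b\<in>rhs \<rho>. le b (lhs \<rho>) \<and> \<not> le (lhs \<rho>) b))"

inductive gen :: "'a rule set \<Rightarrow> 'a ltree \<Rightarrow> bool" for R where
  gen_leaf: "Leaf a \<in> R \<Longrightarrow> gen R (Nd a [])"
| gen_unary: "Unary a b \<in> R \<Longrightarrow> gen R t \<Longrightarrow> root_lab t = b \<Longrightarrow> gen R (Nd a [t])"
| gen_binary: "Binary a b c \<in> R \<Longrightarrow> gen R t1 \<Longrightarrow> gen R t2 \<Longrightarrow> root_lab t1 = b \<Longrightarrow>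
     root_lab t2 = c \<Longrightarrow> gen R (Nd a [t1, t2])"
| gen_star: "Star a b \<in> R \<Longrightarrow> (\<forall>s\<in>set ts. gen R s \<and> root_lab s = b) \<Longrightarrow> gen R (Nd a ts)"

definition lang :: "'a rule set \<Rightarrow> 'a \<Rightarrow> 'a ltree set" where
  "lang R r = {t. gen R t \<and> root_lab t = r}"

definition qf_type :: "'a ltree set \<Rightarrow> nat \<Rightarrow> 'a qf \<Rightarrow> bool" where
  "qf_type T l \<phi> \<longleftrightarrow> qf_vars \<phi> \<subseteq> {..<l} \<and>
     (\<forall>\<psi>. qf_vars \<psi> \<subseteq> {..<l} \<longrightarrow>
        (\<forall>t\<in>T. \<forall>vs\<in>tuples t l. sat t vs \<phi> \<longrightarrow> sat t vs \<psi>) \<or>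
        (\<forall>t\<in>T. \<forall>vs\<in>tuples t l. \<not> (sat t vs \<phi> \<and> sat t vs \<psi>)))"

definition sols :: "'a ltree \<Rightarrow> nat \<Rightarrow> 'a qf \<Rightarrow> nat list list set" where
  "sols t l \<phi> = {vs \<in> tuples t l. sat t vs \<phi>}"

text \<open>Maximal number of satisfying tuples in a tree of T with at most n nodes
  (0 if there is no such tree).\<close>
definition growth :: "'a ltree set \<Rightarrow> nat \<Rightarrow> 'a qf \<Rightarrow> nat \<Rightarrow> nat" where
  "growth T l \<phi> n = Max (insert 0 {card (sols t l \<phi>) | t. t \<in> T \<and> card (nodes t) \<le> n})"

end

theory Submission
  imports Defs "HOL-Library.Sublist" "HOL-Library.List_Lexorder"
begin

text \<open>Take a set X of variables that is minimal such that every variable is determined by X: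
  its value can be computed from the values of X by following atomic formulas implied by the
  type (equalities, parents, leftmost and rightmost children, sibling successors). Two solutions
  agreeing on X then agree everywhere, which also bounds the growth by n^|X|.

  For the lower bound fix one solution. By minimality, the path to a variable x_i in X leaves the
  part of its skeleton determined by the other variables of X at a child of a determined node p;
  the maximal run of skeleton children of p around it contains no other variable of X and is
  flanked on both sides by children outside the skeleton, so p has at least three children and
  stems from a star rule. Repeating the run m times yields m copies of the solution, all still
  satisfying the type, since a quantifier-free formula only sees the skeleton and the copies
  preserve labels, parents, first and last children and sibling adjacency there. Pumping all
  |X| runs independently gives m^|X| solutions in a tree with O(m) nodes.\<close>

section \<open>Positions, subtrees and skeletons\<close>

lemma subt_append: "subt t (p @ q) = (case subt t p of None \<Rightarrow> None | Some s \<Rightarrow> subt s q)"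
proof (induction p arbitrary: t)
  case (Cons i p) then show ?case by (cases t) auto
qed simp

lemma nodes_Nd: "nodes (Nd a ts) = insert [] (\<Union>i<length ts. (Cons i) ` nodes (ts ! i))"
proof (rule set_eqI)
  fix q show "q \<in> nodes (Nd a ts) \<longleftrightarrow> q \<in> insert [] (\<Union>i<length ts. (Cons i) ` nodes (ts ! i))"
    by (cases q) (auto simp: nodes_def)
qed

lemma finite_nodes: "finite (nodes t)"
  by (induction t) (simp add: nodes_Nd)

lemma Nil_in_nodes: "[] \<in> nodes t"
  by (simp add: nodes_def)

lemma nodes_prefix_closed: "q \<in> nodes t \<Longrightarrow> prefix p q \<Longrightarrow> p \<in> nodes t"
  by (auto simp: nodes_def prefix_def subt_append split: option.splits)

lemma butlast_in_nodes: "q \<in> nodes t \<Longrightarrow> butlast q \<in> nodes t"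
  by (metis nodes_prefix_closed prefix_def append_butlast_last_id butlast.simps(1))

lemma child_less_nchildren: "p @ [c] \<in> nodes t \<Longrightarrow> c < nchildren t p"
proof -
  assume "p @ [c] \<in> nodes t"
  then obtain s where s: "subt t p = Some s" "subt s [c] \<noteq> None"
    by (auto simp: nodes_def subt_append split: option.splits)
  then show ?thesis by (cases s) (auto simp: nchildren_def split: if_splits)
qed

lemma subt_nchildren: "0 < nchildren t q \<Longrightarrow> \<exists>b cs. subt t q = Some (Nd b cs) \<and> length cs = nchildren t q"
proof -
  assume "0 < nchildren t q"
  then obtain s where s: "subt t q = Some s" by (cases "subt t q") (auto simp: nchildren_def)
  then show ?thesis by (cases s) (simp add: nchildren_def)
qed

fun num_nodes :: "'a ltree \<Rightarrow> nat" where
  "num_nodes (Nd a ts) = Suc (sum_list (map num_nodes ts))"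

lemma card_nodes: "card (nodes t) = num_nodes t"
proof (induction t)
  case (Nd a ts)
  have fin: "\<And>i. finite ((Cons i) ` nodes (ts ! i))" using finite_nodes by auto
  have "card (\<Union>i<length ts. (Cons i) ` nodes (ts ! i)) = (\<Sum>i<length ts. card ((Cons i) ` nodes (ts ! i)))"
    by (rule card_UN_disjoint) (auto simp: fin)
  also have "\<dots> = (\<Sum>i<length ts. num_nodes (ts ! i))"
    by (rule sum.cong) (auto simp: card_image Nd)
  also have "\<dots> = sum_list (map num_nodes ts)"
    by (simp add: sum_list_sum_nth atLeast0LessThan)
  finally show ?case using fin by (simp add: nodes_Nd card_insert_disjoint image_iff)
qed

lemma num_nodes_pos: "1 \<le> num_nodes t"
  by (cases t) auto

lemma num_nodes_subt: "subt t p = Some s \<Longrightarrow> num_nodes s \<le> num_nodes t"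
proof (induction p arbitrary: t)
  case (Cons i p)
  obtain a ts where t: "t = Nd a ts" by (cases t)
  have i: "i < length ts" and st: "subt (ts ! i) p = Some s" using Cons.prems t by (auto split: if_splits)
  have "num_nodes (ts ! i) \<le> sum_list (map num_nodes ts)" using i elem_le_sum_list[of i "map num_nodes ts"] by simp
  then show ?case using Cons.IH[OF st] t by simp
qed simp

lemma gen_child: "gen R (Nd a ts) \<Longrightarrow> s \<in> set ts \<Longrightarrow> gen R s"
  by (erule gen.cases) auto

lemma gen_subt: "gen R t \<Longrightarrow> subt t p = Some s \<Longrightarrow> gen R s"
proof (induction p arbitrary: t)
  case (Cons i p)
  obtain a ts where t: "t = Nd a ts" by (cases t)
  then show ?case using Cons gen_child[of R a ts "ts ! i"] by (auto split: if_splits)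
qed simp

lemma gen_update: "gen R (Nd a ts) \<Longrightarrow> i < length ts \<Longrightarrow> gen R s \<Longrightarrow> root_lab s = root_lab (ts ! i) \<Longrightarrow>
  gen R (Nd a (ts[i := s]))"
proof (erule gen.cases, goal_cases)
  case (3 a' b c t1 t2)
  then have "i = 0 \<or> i = 1" by auto
  then show ?case using 3 by (auto intro: gen.intros)
next
  case (4 a' b ts')
  then show ?case by (auto intro!: gen.intros dest: set_update_subset_insert[THEN subsetD])
qed (auto intro: gen.intros)

lemma gen_three_children_Star:
  "gen R (Nd a ts) \<Longrightarrow> 3 \<le> length ts \<Longrightarrow> \<exists>b. Star a b \<in> R \<and> (\<forall>s\<in>set ts. gen R s \<and> root_lab s = b)"
  by (erule gen.cases) auto

lemma sib_succ_right_unique: "sib_succ t p q \<Longrightarrow> sib_succ t p q' \<Longrightarrow> q = q'"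
  unfolding sib_succ_def by (metis append_butlast_last_id)

lemma sib_succ_left_unique: "sib_succ t p q \<Longrightarrow> sib_succ t p' q \<Longrightarrow> p = p'"
  unfolding sib_succ_def by (metis append_butlast_last_id Suc_inject)

definition skeleton :: "nat list list \<Rightarrow> nat list set" where
  "skeleton ws = insert [] {q. \<exists>v\<in>set ws. prefix q v}"

lemma skeleton_prefix_closed: "q \<in> skeleton ws \<Longrightarrow> prefix p q \<Longrightarrow> p \<in> skeleton ws"
  by (auto simp: skeleton_def intro: prefix_order.trans)

lemma butlast_in_skeleton: "q \<in> skeleton ws \<Longrightarrow> butlast q \<in> skeleton ws"
  by (erule skeleton_prefix_closed) (metis prefix_def append_butlast_last_id butlast.simps(1) append.right_neutral)

lemma nth_in_skeleton: "i < length ws \<Longrightarrow> ws ! i \<in> skeleton ws"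
  by (auto simp: skeleton_def)

lemma skeleton_subset_nodes: "set ws \<subseteq> nodes t \<Longrightarrow> skeleton ws \<subseteq> nodes t"
  by (auto simp: skeleton_def Nil_in_nodes intro: nodes_prefix_closed)

lemma ev_in_skeleton: "ev vs \<tau> = Some q \<Longrightarrow> q \<in> skeleton vs"
proof (induction \<tau> arbitrary: q)
  case (Par \<tau>) then show ?case by (auto split: option.splits if_splits intro: butlast_in_skeleton)
qed (auto simp: nth_in_skeleton skeleton_def split: if_splits)

lemma trm_vars_Par_power: "trm_vars ((Par ^^ k) \<tau>) = trm_vars \<tau>"
  by (induction k) auto

lemma ev_Par_power: "j < length vs \<Longrightarrow> k \<le> length (vs ! j) \<Longrightarrow>
   ev vs ((Par ^^ k) (Var j)) = Some (take (length (vs ! j) - k) (vs ! j))"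
proof (induction k)
  case (Suc k)
  have "take (length (vs ! j) - k) (vs ! j) \<noteq> []" using Suc.prems by (cases "vs ! j") auto
  then show ?case using Suc by (simp add: butlast_take)
qed simp

lemma ev_Par_power_prefix:
  assumes j: "j < length vs" and q: "prefix q (vs ! j)"
  shows "ev vs ((Par ^^ (length (vs ! j) - length q)) (Var j)) = Some q"
proof -
  have "length q \<le> length (vs ! j)" using q by (rule prefix_length_le)
  moreover have "take (length q) (vs ! j) = q" using q by (auto simp: prefix_def)
  ultimately show ?thesis using ev_Par_power[OF j, of "length (vs ! j) - length q"] by simp
qed

lemma skeleton_term: "q \<in> skeleton vs \<Longrightarrow> \<exists>\<tau>. trm_vars \<tau> \<subseteq> {..<length vs} \<and> ev vs \<tau> = Some q"
proof (cases "q = []")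
  case False
  assume "q \<in> skeleton vs"
  then obtain j where j: "j < length vs" "prefix q (vs ! j)"
    using False by (auto simp: skeleton_def in_set_conv_nth)
  show ?thesis
    using ev_Par_power_prefix[OF j] j(1) by (intro exI[of _ "(Par ^^ _) (Var j)"]) (simp add: trm_vars_Par_power)
qed (auto intro: exI[of _ Root])

locale skeleton_embedding =
  fixes t :: "'a ltree" and t' :: "'a ltree" and ws :: "nat list list" and h :: "nat list \<Rightarrow> nat list"
  assumes h_Nil: "h [] = []"
    and h_parent: "\<And>q. q \<in> skeleton ws \<Longrightarrow> q \<noteq> [] \<Longrightarrow> h q \<noteq> [] \<and> h (butlast q) = butlast (h q)"
    and h_inj: "inj_on h (skeleton ws)"
    and h_lab: "\<And>q. q \<in> skeleton ws \<Longrightarrow> lab t' (h q) = lab t q"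
    and h_leftmost: "\<And>q. q \<in> skeleton ws \<Longrightarrow> leftmost t' (h q) = leftmost t q"
    and h_rightmost: "\<And>q. q \<in> skeleton ws \<Longrightarrow> rightmost t' (h q) = rightmost t q"
    and h_sib_succ: "\<And>q1 q2. q1 \<in> skeleton ws \<Longrightarrow> q2 \<in> skeleton ws \<Longrightarrow>
                       sib_succ t' (h q1) (h q2) = sib_succ t q1 q2"
    and h_sib_le: "\<And>q1 q2. q1 \<in> skeleton ws \<Longrightarrow> q2 \<in> skeleton ws \<Longrightarrow>
                       sib_le t' (h q1) (h q2) = sib_le t q1 q2"
begin

lemma ev_map: "ev (map h ws) \<tau> = map_option h (ev ws \<tau>)"
proof (induction \<tau>)
  case (Par \<tau>)
  show ?case
  proof (cases "ev ws \<tau>")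
    case (Some q)
    then have "q \<in> skeleton ws" by (rule ev_in_skeleton)
    then show ?thesis using Some Par h_Nil h_parent by (cases "q = []") auto
  qed (use Par in simp)
qed (simp_all add: h_Nil)

lemma sat_map: "sat t' (map h ws) \<psi> = sat t ws \<psi>"
proof (induction \<psi>)
  case (Eq s u) then show ?case
    by (auto simp: ev_map split: option.splits dest!: ev_in_skeleton dest: inj_onD[OF h_inj])
next
  case (Lab a s) then show ?case by (auto simp: ev_map h_lab split: option.splits dest!: ev_in_skeleton)
next
  case (LeftM s) then show ?case by (auto simp: ev_map h_leftmost split: option.splits dest!: ev_in_skeleton)
next
  case (RightM s) then show ?case by (auto simp: ev_map h_rightmost split: option.splits dest!: ev_in_skeleton)
next
  case (SibLe s u) then show ?case by (auto simp: ev_map h_sib_le split: option.splits dest!: ev_in_skeleton)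
next
  case (SibSucc s u) then show ?case by (auto simp: ev_map h_sib_succ split: option.splits dest!: ev_in_skeleton)
qed auto

end

section \<open>Pumping the children of a star node\<close>

fun replace_subt :: "'a ltree \<Rightarrow> nat list \<Rightarrow> 'a ltree \<Rightarrow> 'a ltree" where
  "replace_subt t [] s = s"
| "replace_subt (Nd a ts) (i # p) s =
     (if i < length ts then Nd a (ts[i := replace_subt (ts ! i) p s]) else Nd a ts)"

lemma subt_replace_subt_below: "p \<in> nodes t \<Longrightarrow> subt (replace_subt t p s) (p @ q) = subt s q"
proof (induction p arbitrary: t)
  case (Cons i p) then show ?case by (cases t) (auto simp: nodes_def split: if_splits)
qed simp

lemma subt_replace_subt_incomparable:
  "\<not> prefix p q \<Longrightarrow> \<not> prefix q p \<Longrightarrow> subt (replace_subt t p s) q = subt t q"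
proof (induction p arbitrary: t q)
  case (Cons i p)
  obtain a ts where t: "t = Nd a ts" by (cases t)
  show ?case
  proof (cases q)
    case (Cons j q')
    then show ?thesis using Cons.prems Cons.IH t by (cases "j = i") auto
  qed (use Cons in simp)
qed simp

lemma subt_replace_subt_above:
  "prefix q p \<Longrightarrow> q \<noteq> p \<Longrightarrow> subt t q = Some s0 \<Longrightarrow>
   \<exists>s1. subt (replace_subt t p s) q = Some s1 \<and> root_lab s1 = root_lab s0 \<and> length (kids s1) = length (kids s0)"
proof (induction q arbitrary: t p)
  case Nil
  then obtain i p' where "p = i # p'" by (cases p) auto
  then show ?case using Nil by (cases t) auto
next
  case (Cons j q)
  then obtain p' where p: "p = j # p'" by (auto simp: prefix_def)
  obtain a ts where t: "t = Nd a ts" by (cases t)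
  have "j < length ts" using Cons.prems t by (auto split: if_splits)
  then show ?case using Cons.prems Cons.IH[of p' "ts ! j"] p t by auto
qed

lemma replace_subt_above:
  assumes "prefix q p" "q \<noteq> p" "q \<in> nodes t"
  shows "q \<in> nodes (replace_subt t p s)" "lab (replace_subt t p s) q = lab t q"
    "nchildren (replace_subt t p s) q = nchildren t q"
  using assms subt_replace_subt_above[of q p t _ s] by (auto simp: nodes_def lab_def nchildren_def)

lemma root_lab_replace_subt: "p \<noteq> [] \<Longrightarrow> root_lab (replace_subt t p s) = root_lab t"
  by (cases p; cases t) auto

lemma num_nodes_replace_subt:
  "subt t p = Some s0 \<Longrightarrow> num_nodes (replace_subt t p s) + num_nodes s0 = num_nodes t + num_nodes s"
proof (induction p arbitrary: t)
  case (Cons i p)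
  obtain a ts where t: "t = Nd a ts" by (cases t)
  have i: "i < length ts" and st: "subt (ts ! i) p = Some s0" using Cons.prems t by (auto split: if_splits)
  have "sum_list (map num_nodes (ts[i := replace_subt (ts ! i) p s])) + num_nodes (ts ! i)
        = sum_list (map num_nodes ts) + num_nodes (replace_subt (ts ! i) p s)"
    using i elem_le_sum_list[of i "map num_nodes ts"] by (simp add: map_update sum_list_update)
  then show ?case using t i Cons.IH[OF st] by simp
qed simp

lemma gen_replace_subt:
  "gen R t \<Longrightarrow> subt t p = Some s0 \<Longrightarrow> gen R s \<Longrightarrow> root_lab s = root_lab s0 \<Longrightarrow> gen R (replace_subt t p s)"
proof (induction p arbitrary: t)
  case (Cons i p)
  obtain a ts where t: "t = Nd a ts" by (cases t)
  have i: "i < length ts" and st: "subt (ts ! i) p = Some s0" using Cons.prems t by (auto split: if_splits)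
  have "gen R (ts ! i)" using Cons.prems(1) t i by (auto intro: gen_child)
  then have "gen R (replace_subt (ts ! i) p s)" using Cons.IH st Cons.prems by blast
  moreover have "root_lab (replace_subt (ts ! i) p s) = root_lab (ts ! i)"
    using Cons.prems st by (cases p) (auto simp: root_lab_replace_subt)
  ultimately show ?case using gen_update[of R a ts i] Cons.prems t i by auto
qed simp

text \<open>New position of child c when the children a, ..., a+g-1, followed by a separator, are
  repeated m times and c is sent into the j-th copy.\<close>

definition pump_index :: "nat \<Rightarrow> nat \<Rightarrow> nat \<Rightarrow> nat \<Rightarrow> nat \<Rightarrow> nat" where
  "pump_index a g m j c = (if c < a then c else if c < a + g then c + j * (g + 1) else c + m * (g + 1) - g)"

lemma block_offset_bound: "(j::nat) < m \<Longrightarrow> j * (g + 1) + (g + 1) \<le> m * (g + 1)"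
  using mult_le_mono1[of "Suc j" m "g + 1"] by simp

lemma pump_index_le_iff: "j < m \<Longrightarrow> (pump_index a g m j c1 \<le> pump_index a g m j c2) = (c1 \<le> c2)"
  using block_offset_bound[of j m g] by (auto simp: pump_index_def)

lemma pump_index_eq_iff: "j < m \<Longrightarrow> (pump_index a g m j c1 = pump_index a g m j c2) = (c1 = c2)"
  using pump_index_le_iff[of j m a g c1 c2] pump_index_le_iff[of j m a g c2 c1] by auto

lemma pump_index_eq_0_iff: "1 \<le> a \<Longrightarrow> (pump_index a g m j c = 0) = (c = 0)"
  by (auto simp: pump_index_def)

lemma pump_index_Suc_iff:
  "j < m \<Longrightarrow> 1 \<le> a \<Longrightarrow> 1 \<le> g \<Longrightarrow> c1 \<notin> {a - 1, a + g} \<Longrightarrow> c2 \<notin> {a - 1, a + g} \<Longrightarrow>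
   (pump_index a g m j c2 = Suc (pump_index a g m j c1)) = (c2 = Suc c1)"
  using block_offset_bound[of j m g] by (auto simp: pump_index_def)

lemma pump_index_last_iff: "j < m \<Longrightarrow> c < n \<Longrightarrow> a + g < n \<Longrightarrow>
   (Suc (pump_index a g m j c) = n + m * (g + 1) - g) = (Suc c = n)"
  using block_offset_bound[of j m g] by (auto simp: pump_index_def)

lemma pump_index_block_distinct:
  assumes "j \<noteq> j'" "a \<le> c" "c < a + g"
  shows "pump_index a g m j c \<noteq> pump_index a g m j' c"
proof -
  have "j * (g + 1) \<noteq> j' * (g + 1)" using assms(1) by (metis mult_cancel2 add_is_0 one_neq_zero)
  then show ?thesis using assms by (simp add: pump_index_def)
qed

lemma prefix_strict_cases: "prefix p q \<Longrightarrow> q \<noteq> p \<Longrightarrow> \<exists>c r. q = p @ c # r"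
  unfolding prefix_def by (metis append.right_neutral list.exhaust)

lemma length_concat_replicate: "length (concat (replicate k xs)) = k * length xs"
  by (induction k) auto

lemma nth_concat_replicate:
  "r < length xs \<Longrightarrow> j < k \<Longrightarrow> concat (replicate k xs) ! (j * length xs + r) = xs ! r"
proof (induction k arbitrary: j)
  case (Suc k) then show ?case
    by (cases j) (auto simp: nth_append length_concat_replicate add.assoc)
qed simp

lemma sum_list_take_drop: "k + n \<le> length xs \<Longrightarrow>
  sum_list (map f (take n (drop k xs))) = (\<Sum>i = k..<k + n. f (xs ! i))"
proof -
  assume "k + n \<le> length xs"
  then have "take n (drop k xs) = map (\<lambda>i. xs ! i) [k..<k + n]" by (intro nth_equalityI) auto
  then show ?thesis using sum_set_upt_conv_sum_list_nat[of "\<lambda>i. f (xs ! i)" k "k + n"] by (simp add: comp_def)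
qed

text \<open>The copy of child a-1 that closes each block separates consecutive copies, so no
  sibling successor links two of them. A node with at least three children stems from a star
  rule, so the pumped tree is still generated by the grammar.\<close>

locale star_pump =
  fixes t :: "'a ltree" and p :: "nat list" and b :: 'a and cs :: "'a ltree list" and a g m :: nat
  assumes subt_p: "subt t p = Some (Nd b cs)" and a_pos: "1 \<le> a" and g_pos: "1 \<le> g"
    and block_in_kids: "a + g < length cs" and m_pos: "1 \<le> m"
begin

definition block where "block = take g (drop a cs) @ [cs ! (a - 1)]"
definition pumped_kids where "pumped_kids = take a cs @ concat (replicate m block) @ drop (a + g) cs"
definition pumped where "pumped = replace_subt t p (Nd b pumped_kids)"
definition shift where "shift j q = (if length p < length q \<and> take (length p) q = p
    then p @ pump_index a g m j (q ! length p) # drop (Suc (length p)) q else q)"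
definition pumped_region where "pumped_region = {q. \<exists>c\<ge>a. prefix (p @ [c]) q}"
definition block_size where "block_size = (\<Sum>i = a - 1..<a + g. num_nodes (cs ! i))"

lemma length_block: "length block = g + 1"
  using block_in_kids by (simp add: block_def)

lemma length_pumped_kids: "length pumped_kids = length cs + m * (g + 1) - g"
  using block_in_kids by (simp add: pumped_kids_def length_concat_replicate length_block)

lemma nth_pumped_kids:
  assumes "j < m" "c < length cs"
  shows "pump_index a g m j c < length pumped_kids \<and> pumped_kids ! pump_index a g m j c = cs ! c"
proof -
  have jm: "j * (g + 1) + (g + 1) \<le> m * (g + 1)" using block_offset_bound assms by blast
  consider "c < a" | "a \<le> c \<and> c < a + g" | "a + g \<le> c" by linarith
  then show ?thesis
  proof cases
    case 1 then show ?thesis using block_in_kids assms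
      by (auto simp: pump_index_def pumped_kids_def nth_append length_concat_replicate length_block)
  next
    case 2
    have "concat (replicate m block) ! (j * length block + (c - a)) = block ! (c - a)"
      by (rule nth_concat_replicate) (use 2 assms length_block in auto)
    moreover have "block ! (c - a) = cs ! c" using 2 block_in_kids by (auto simp: block_def nth_append)
    ultimately show ?thesis using 2 block_in_kids assms jm
      by (auto simp: pump_index_def pumped_kids_def nth_append length_concat_replicate length_block
          min_def algebra_simps)
  next
    case 3
    have e: "c + m * (g + 1) - g = a + m * (g + 1) + (c - (a + g))" using 3 by simp
    show ?thesis using 3 block_in_kids assms jm unfolding pump_index_def e
      by (auto simp: pumped_kids_def nth_append length_concat_replicate length_block min_def)
  qed
qed

lemma set_pumped_kids: "set pumped_kids \<subseteq> set cs"
proof -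
  have "set block \<subseteq> set cs"
    using block_in_kids a_pos by (auto simp: block_def dest: in_set_takeD in_set_dropD)
  then show ?thesis by (auto simp: pumped_kids_def dest: in_set_takeD in_set_dropD)
qed

lemma p_in_nodes: "p \<in> nodes t"
  using subt_p by (simp add: nodes_def)

lemma nchildren_p: "nchildren t p = length cs"
  using subt_p by (simp add: nchildren_def)

lemma subt_pumped_below: "subt pumped (p @ q) = subt (Nd b pumped_kids) q"
  unfolding pumped_def by (rule subt_replace_subt_below[OF p_in_nodes])

lemma nchildren_pumped_p: "nchildren pumped p = length pumped_kids"
  using subt_pumped_below[of "[]"] by (simp add: nchildren_def)

lemma shift_below: "shift j (p @ c # q) = p @ pump_index a g m j c # q"
  by (simp add: shift_def)

lemma shift_other: "\<not> (prefix p q \<and> q \<noteq> p) \<Longrightarrow> shift j q = q"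
  by (auto simp: shift_def prefix_def) (metis append_take_drop_id)

lemma shift_cases:
  obtains c r where "q = p @ c # r" "shift j q = p @ pump_index a g m j c # r"
  | "\<not> (prefix p q \<and> q \<noteq> p)" "shift j q = q"
  by (metis prefix_strict_cases shift_below shift_other)

lemma shift_outside_region: "q \<notin> pumped_region \<Longrightarrow> shift j q = q"
  by (cases q j rule: shift_cases) (auto simp: pumped_region_def pump_index_def)

lemma length_shift: "length (shift j q) = length q"
  by (cases q j rule: shift_cases) auto

lemma shift_eq_Nil_iff: "shift j q = [] \<longleftrightarrow> q = []"
  using length_shift[of j q] by auto

lemma butlast_shift: "shift j (butlast q) = butlast (shift j q)"
proof (cases q j rule: shift_cases)
  case (1 c r)
  then show ?thesis by (cases "r = []") (simp_all add: shift_below shift_other butlast_append)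
next
  case 2
  have "\<not> (prefix p (butlast q) \<and> butlast q \<noteq> p)"
  proof
    assume A: "prefix p (butlast q) \<and> butlast q \<noteq> p"
    then have "prefix p q" using prefixeq_butlast prefix_order.trans by blast
    moreover have "length p < length q"
      using A prefix_length_le[of p "butlast q"] by (cases q rule: rev_cases) auto
    ultimately show False using 2 by auto
  qed
  then show ?thesis using 2 by (simp add: shift_other)
qed

lemma last_shift: "butlast q \<noteq> p \<Longrightarrow> last (shift j q) = last q"
proof (cases q j rule: shift_cases)
  case (1 c r)
  moreover assume "butlast q \<noteq> p"
  ultimately have "r \<noteq> []" by (auto simp: butlast_append)
  then show ?thesis using 1 by simp
qed simp

lemma shift_child: "butlast q = p \<Longrightarrow> q \<noteq> [] \<Longrightarrow> shift j q = p @ [pump_index a g m j (last q)]"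
  by (metis append_butlast_last_id shift_below)

lemma inj_shift: "j < m \<Longrightarrow> inj (shift j)"
proof (rule injI)
  fix q1 q2 assume j: "j < m" and e: "shift j q1 = shift j q2"
  show "q1 = q2"
  proof (cases "prefix p q1 \<and> q1 \<noteq> p"; cases "prefix p q2 \<and> q2 \<noteq> p")
    assume "prefix p q1 \<and> q1 \<noteq> p" "prefix p q2 \<and> q2 \<noteq> p"
    then obtain c1 r1 c2 r2 where "q1 = p @ c1 # r1" "q2 = p @ c2 # r2" using prefix_strict_cases by meson
    then show ?thesis using e pump_index_eq_iff[OF j] by (simp add: shift_below)
  next
    assume "prefix p q1 \<and> q1 \<noteq> p" and q2: "\<not> (prefix p q2 \<and> q2 \<noteq> p)"
    then obtain c1 r1 where "q1 = p @ c1 # r1" using prefix_strict_cases by meson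
    then have "q2 = p @ pump_index a g m j c1 # r1" using e shift_other[OF q2] by (simp add: shift_below)
    then show ?thesis using q2 by simp
  next
    assume q1: "\<not> (prefix p q1 \<and> q1 \<noteq> p)" and "prefix p q2 \<and> q2 \<noteq> p"
    then obtain c2 r2 where "q2 = p @ c2 # r2" using prefix_strict_cases by meson
    then have "q1 = p @ pump_index a g m j c2 # r2" using e shift_other[OF q1] by (simp add: shift_below)
    then show ?thesis using q1 by simp
  next
    assume "\<not> (prefix p q1 \<and> q1 \<noteq> p)" "\<not> (prefix p q2 \<and> q2 \<noteq> p)"
    then show ?thesis using e by (simp add: shift_other)
  qed
qed

lemma subt_below_p: "subt t (p @ q) = subt (Nd b cs) q"
  using subt_p by (simp add: subt_append)

lemma subt_shift_below:
  assumes "c < length cs" "j < m"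
  shows "subt pumped (shift j (p @ c # r)) = subt t (p @ c # r)"
  using nth_pumped_kids[OF assms(2,1)] assms by (simp add: shift_below subt_pumped_below subt_below_p)

lemma shift_node:
  assumes q: "q \<in> nodes t" and j: "j < m"
  shows "shift j q \<in> nodes pumped \<and> lab pumped (shift j q) = lab t q \<and>
    (q \<noteq> p \<longrightarrow> nchildren pumped (shift j q) = nchildren t q)"
proof (cases q j rule: shift_cases)
  case (1 c r)
  then have "c < length cs" using q by (auto simp: nodes_def subt_below_p split: if_splits)
  then have "subt pumped (shift j q) = subt t q" using subt_shift_below j 1 by blast
  then show ?thesis using q by (simp add: nodes_def lab_def nchildren_def)
next
  case 2
  consider "q = p" | "prefix q p" "q \<noteq> p" | "\<not> prefix p q" "\<not> prefix q p" using 2 by blast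
  then show ?thesis
  proof cases
    case 1
    then show ?thesis using subt_pumped_below[of "[]"] subt_p 2 by (simp add: nodes_def lab_def)
  next
    case 3
    then have "subt pumped q = subt t q" unfolding pumped_def by (rule subt_replace_subt_incomparable)
    then show ?thesis using q 2 by (simp add: nodes_def lab_def nchildren_def)
  qed (use replace_subt_above[OF _ _ q] 2 in \<open>simp add: pumped_def\<close>)
qed

lemma subt_outside_region:
  assumes "q \<notin> pumped_region" "\<not> prefix q p"
  shows "subt pumped q = subt t q"
proof (cases "prefix p q")
  case True
  then obtain c r where q: "q = p @ c # r" using assms prefix_strict_cases by blast
  then have "c < a" using assms by (auto simp: pumped_region_def)
  then have "subt pumped (shift 0 q) = subt t q" using q subt_shift_below[of c 0 r] block_in_kids m_pos by simp
  then show ?thesis using shift_outside_region assms by simp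
next
  case False then show ?thesis using subt_replace_subt_incomparable assms unfolding pumped_def by blast
qed

lemma nchildren_outside_region:
  assumes "q \<notin> pumped_region"
  shows "nchildren t q \<le> nchildren pumped q"
proof -
  consider "q = p" | "prefix q p" "q \<noteq> p" | "\<not> prefix q p" by blast
  then show ?thesis
  proof cases
    case 1
    have "g \<le> m * (g + 1)" using m_pos by (simp add: trans_le_add2)
    then show ?thesis using 1 nchildren_p nchildren_pumped_p length_pumped_kids by simp
  next
    case 2
    then show ?thesis using replace_subt_above(3)[OF 2, of t "Nd b pumped_kids"]
      by (cases "q \<in> nodes t") (simp_all add: pumped_def nodes_def nchildren_def)
  next
    case 3 then show ?thesis using subt_outside_region assms by (simp add: nchildren_def)
  qed
qed

abbreviation borders where "borders \<equiv> {p @ [a - 1], p @ [a + g]}"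

lemma child_index_bounds:
  assumes "q \<in> nodes t" "butlast q = p" "q \<noteq> []" "q \<notin> borders"
  shows "last q \<notin> {a - 1, a + g} \<and> last q < length cs"
proof -
  have q: "q = p @ [last q]" using assms(2,3) by (metis append_butlast_last_id)
  then have "last q < length cs" using assms(1) subt_below_p[of "[last q]"] by (auto simp: nodes_def split: if_splits)
  then show ?thesis using assms(4) q by auto
qed

lemma shift_leftmost:
  assumes "q \<in> nodes t" "j < m"
  shows "leftmost pumped (shift j q) = leftmost t q"
proof (cases "butlast q = p \<and> q \<noteq> []")
  case True
  then show ?thesis using shift_node[OF assms] shift_child[of q j] pump_index_eq_0_iff[OF a_pos] assms(1)
    by (simp add: leftmost_def)
next
  case False
  then show ?thesis using shift_node[OF assms] last_shift[of q j] shift_eq_Nil_iff[of j q] assms(1)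
    by (auto simp: leftmost_def)
qed

lemma shift_rightmost:
  assumes q: "q \<in> nodes t" and j: "j < m" and b: "q \<notin> borders"
  shows "rightmost pumped (shift j q) = rightmost t q"
proof (cases "butlast q = p \<and> q \<noteq> []")
  case True
  have "(Suc (pump_index a g m j (last q)) = length cs + m * (g + 1) - g) = (Suc (last q) = length cs)"
    by (rule pump_index_last_iff[OF j]) (use child_index_bounds[OF q _ _ b] True block_in_kids in auto)
  then show ?thesis using shift_node[OF q j] shift_child[of q j] True q
      nchildren_p nchildren_pumped_p length_pumped_kids
    by (auto simp: rightmost_def)
next
  case False
  show ?thesis
  proof (cases "q = []")
    case True then show ?thesis using shift_node[OF q j] by (simp add: rightmost_def shift_def Nil_in_nodes)
  next
    case qne: False
    then have "butlast q \<noteq> p" using False by blast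
    then show ?thesis using shift_node[OF q j] shift_node[OF butlast_in_nodes[OF q] j] last_shift[of q j] qne
        shift_eq_Nil_iff[of j q] q
      by (simp add: rightmost_def butlast_shift)
  qed
qed

lemma shift_same_parent:
  "j < m \<Longrightarrow> (butlast (shift j q1) = butlast (shift j q2)) = (butlast q1 = butlast q2)"
  using inj_shift by (simp add: butlast_shift[symmetric] inj_eq)

lemma shift_sib_succ:
  assumes q1: "q1 \<in> nodes t" "q1 \<notin> borders" and q2: "q2 \<in> nodes t" "q2 \<notin> borders" and j: "j < m"
  shows "sib_succ pumped (shift j q1) (shift j q2) = sib_succ t q1 q2"
proof (cases "butlast q1 = p \<and> q1 \<noteq> [] \<and> butlast q2 = p \<and> q2 \<noteq> []")
  case True
  have "(pump_index a g m j (last q2) = Suc (pump_index a g m j (last q1))) = (last q2 = Suc (last q1))"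
    by (rule pump_index_Suc_iff[OF j a_pos g_pos]) (use child_index_bounds q1 q2 True in auto)
  then show ?thesis using shift_node[OF q1(1) j] shift_node[OF q2(1) j] shift_child[of q1 j] shift_child[of q2 j]
      True q1 q2
    by (auto simp: sib_succ_def)
next
  case False
  then show ?thesis using shift_node[OF q1(1) j] shift_node[OF q2(1) j] q1 q2 shift_same_parent[OF j]
      last_shift[of q1 j] last_shift[of q2 j] shift_eq_Nil_iff[of j q1] shift_eq_Nil_iff[of j q2]
    by (auto simp: sib_succ_def)
qed

lemma shift_sib_le:
  assumes q1: "q1 \<in> nodes t" and q2: "q2 \<in> nodes t" and j: "j < m"
  shows "sib_le pumped (shift j q1) (shift j q2) = sib_le t q1 q2"
proof -
  have eq: "(shift j q1 = shift j q2) = (q1 = q2)" using inj_shift[OF j] by (simp add: inj_eq)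
  show ?thesis
  proof (cases "butlast q1 = p \<and> q1 \<noteq> [] \<and> butlast q2 = p \<and> q2 \<noteq> []")
    case True
    then show ?thesis using shift_node[OF q1 j] shift_node[OF q2 j] shift_child[of q1 j] shift_child[of q2 j]
        q1 q2 eq pump_index_le_iff[OF j]
      by (auto simp: sib_le_def)
  next
    case False
    then show ?thesis using shift_node[OF q1 j] shift_node[OF q2 j] q1 q2 shift_same_parent[OF j] eq
        last_shift[of q1 j] last_shift[of q2 j] shift_eq_Nil_iff[of j q1] shift_eq_Nil_iff[of j q2]
      by (auto simp: sib_le_def)
  qed
qed

lemma shift_embedding:
  assumes ws: "set ws \<subseteq> nodes t" and b: "borders \<inter> skeleton ws = {}" and j: "j < m"
  shows "skeleton_embedding t pumped ws (shift j)"
proof -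
  have q: "q \<in> nodes t \<and> q \<notin> borders" if "q \<in> skeleton ws" for q
    using that skeleton_subset_nodes[OF ws] b by blast
  show ?thesis
  proof
    show "shift j [] = []" by (simp add: shift_def)
    show "inj_on (shift j) (skeleton ws)" using inj_shift[OF j] by (rule inj_on_subset) simp
  qed (use q shift_node[OF _ j] shift_leftmost[OF _ j] shift_rightmost[OF _ j] shift_sib_succ[OF _ _ _ _ j]
      shift_sib_le[OF _ _ j] in \<open>auto simp: shift_eq_Nil_iff butlast_shift\<close>)
qed

lemma pumped_in_lang: assumes "t \<in> lang R r" shows "pumped \<in> lang R r"
proof -
  have gt: "gen R t" and rt: "root_lab t = r" using assms by (auto simp: lang_def)
  have "3 \<le> length cs" using block_in_kids a_pos g_pos by linarith
  then obtain c where "Star b c \<in> R" and "\<forall>s\<in>set cs. gen R s \<and> root_lab s = c"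
    using gen_three_children_Star[OF gen_subt[OF gt subt_p]] by blast
  then have "gen R (Nd b pumped_kids)" using set_pumped_kids by (auto intro!: gen_star)
  then have "gen R pumped" unfolding pumped_def by (rule gen_replace_subt[OF gt subt_p]) simp
  moreover have "root_lab pumped = r"
  proof (cases "p = []")
    case True
    then have "t = Nd b cs" using subt_p by simp
    then show ?thesis unfolding pumped_def using rt True by simp
  qed (use rt in \<open>simp add: pumped_def root_lab_replace_subt\<close>)
  ultimately show ?thesis by (simp add: lang_def)
qed

lemma num_nodes_pumped: "num_nodes pumped \<le> num_nodes t + m * block_size"
proof -
  have e: "num_nodes pumped + num_nodes (Nd b cs) = num_nodes t + num_nodes (Nd b pumped_kids)"
    unfolding pumped_def by (rule num_nodes_replace_subt[OF subt_p])
  have "drop (a - 1) cs = cs ! (a - 1) # drop a cs"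
    using a_pos block_in_kids Cons_nth_drop_Suc[of "a - 1" cs] by simp
  then have "take (g + 1) (drop (a - 1) cs) = cs ! (a - 1) # take g (drop a cs)" by simp
  then have "sum_list (map num_nodes block) = sum_list (map num_nodes (take (g + 1) (drop (a - 1) cs)))"
    by (simp add: block_def)
  also have "\<dots> = block_size"
    unfolding block_size_def using a_pos block_in_kids by (subst sum_list_take_drop) auto
  finally have block: "sum_list (map num_nodes block) = block_size" .
  have rep: "sum_list (map num_nodes (concat (replicate k xs))) = k * sum_list (map num_nodes xs)" for k xs
    by (induction k) auto
  have split: "cs = take a cs @ take g (drop a cs) @ drop (a + g) cs"
    by (metis append.assoc append_take_drop_id add.commute drop_drop take_add)
  have "sum_list (map num_nodes cs) = sum_list (map num_nodes (take a cs))
      + sum_list (map num_nodes (take g (drop a cs))) + sum_list (map num_nodes (drop (a + g) cs))"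
    by (subst split) simp
  moreover have "sum_list (map num_nodes pumped_kids) = sum_list (map num_nodes (take a cs))
      + m * block_size + sum_list (map num_nodes (drop (a + g) cs))"
    by (simp add: pumped_kids_def rep block)
  ultimately show ?thesis using e by simp
qed

lemma block_size_le: "block_size \<le> num_nodes t"
proof -
  have "block_size \<le> (\<Sum>i<length cs. num_nodes (cs ! i))"
    unfolding block_size_def using block_in_kids by (intro sum_mono2) auto
  also have "\<dots> < num_nodes (Nd b cs)" by (simp add: sum_list_sum_nth atLeast0LessThan)
  also have "\<dots> \<le> num_nodes t" by (rule num_nodes_subt[OF subt_p])
  finally show ?thesis by simp
qed

lemma take_shift: "take k (shift j v) = shift j (take k v)"
proof (cases v j rule: shift_cases)
  case (1 c r)
  show ?thesis
  proof (cases "k \<le> length p")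
    case True
    have tk: "take k v = take k p" using 1 True by simp
    have "\<not> (prefix p (take k v) \<and> take k v \<noteq> p)"
    proof
      assume A: "prefix p (take k v) \<and> take k v \<noteq> p"
      then have "length p \<le> k" using tk prefix_length_le by fastforce
      then show False using A tk by simp
    qed
    then have "shift j (take k v) = take k v" by (rule shift_other)
    moreover have "take k (shift j v) = take k p" using 1 True by simp
    ultimately show ?thesis using tk by simp
  next
    case False
    then have k: "k = length p + Suc (k - length p - 1)" by simp
    have "take k v = p @ c # take (k - length p - 1) r" using 1 by (subst k) simp
    moreover have "take k (shift j v) = p @ pump_index a g m j c # take (k - length p - 1) r"
      using 1 by (subst k) simp
    ultimately show ?thesis by (simp add: shift_below)
  qed
next
  case 2
  have "\<not> (prefix p (take k v) \<and> take k v \<noteq> p)"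
  proof
    assume A: "prefix p (take k v) \<and> take k v \<noteq> p"
    then have "prefix p v" using take_is_prefix prefix_order.trans by blast
    moreover have "v \<noteq> p" using A by (metis prefix_order.antisym take_is_prefix)
    ultimately show False using 2 by blast
  qed
  then show ?thesis using 2 by (simp add: shift_other)
qed

lemma skeleton_map_shift: "q \<in> skeleton (map (shift j) ws) \<Longrightarrow> \<exists>q'\<in>skeleton ws. q = shift j q'"
proof -
  assume "q \<in> skeleton (map (shift j) ws)"
  then consider "q = []" | v where "v \<in> set ws" "prefix q (shift j v)" by (auto simp: skeleton_def)
  then show ?thesis
  proof cases
    case 1 then show ?thesis by (auto simp: skeleton_def shift_def)
  next
    case 2
    then have "q = take (length q) (shift j v)" by (auto simp: prefix_def)
    then have "q = shift j (take (length q) v)" by (simp add: take_shift)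
    then show ?thesis using 2 take_is_prefix by (auto simp: skeleton_def)
  qed
qed

definition shifted :: "nat list list set \<Rightarrow> nat list list set" where
  "shifted F = (\<lambda>(j, ws). map (shift j) ws) ` ({..<m} \<times> F)"

lemma card_shifted:
  assumes fin: "finite F" and u: "\<And>ws. ws \<in> F \<Longrightarrow> u < length ws \<and> ws ! u = q0"
    and q0: "prefix (p @ [c0]) q0" "a \<le> c0" "c0 < a + g"
  shows "card (shifted F) = m * card F"
proof -
  have "inj_on (\<lambda>(j, ws). map (shift j) ws) ({..<m} \<times> F)"
  proof (rule inj_onI, clarify)
    fix j ws j' ws' assume j: "j < m" "j' < m" and ws: "ws \<in> F" "ws' \<in> F"
      and e: "map (shift j) ws = map (shift j') ws'"
    obtain r where qr: "q0 = p @ c0 # r" using q0(1) by (auto simp: prefix_def)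
    have "shift j q0 = shift j' q0" using e u[OF ws(1)] u[OF ws(2)] by (metis nth_map)
    then have "j = j'" using qr pump_index_block_distinct[OF _ q0(2,3)] by (auto simp: shift_below)
    then show "j = j' \<and> ws = ws'" using e inj_shift[OF j(1)] by (simp add: inj_map_eq_map)
  qed
  then show ?thesis unfolding shifted_def using card_image by (fastforce simp: card_cartesian_product)
qed

lemma shifted_sols:
  assumes "F \<subseteq> sols t l \<phi>" and "\<And>ws. ws \<in> F \<Longrightarrow> borders \<inter> skeleton ws = {}"
  shows "shifted F \<subseteq> sols pumped l \<phi>"
proof (clarsimp simp: shifted_def)
  fix j ws assume j: "j < m" and ws: "ws \<in> F"
  have ws': "set ws \<subseteq> nodes t" "length ws = l" "sat t ws \<phi>" using assms(1) ws by (auto simp: sols_def tuples_def)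
  interpret skeleton_embedding t pumped ws "shift j"
    by (rule shift_embedding) (use ws' assms(2)[OF ws] j in auto)
  show "map (shift j) ws \<in> sols pumped l \<phi>"
    using ws' shift_node[OF _ j] sat_map by (auto simp: sols_def tuples_def)
qed

end

section \<open>Growth\<close>

lemma finite_sols: "finite (sols t l \<phi>)"
proof -
  have "sols t l \<phi> \<subseteq> {xs. set xs \<subseteq> nodes t \<and> length xs = l}" by (auto simp: sols_def tuples_def)
  then show ?thesis using finite_lists_length_eq[OF finite_nodes] finite_subset by blast
qed

lemma card_sols_le:
  assumes uniq: "\<forall>vs\<in>sols t l \<phi>. \<forall>ws\<in>sols t l \<phi>. (\<forall>i\<in>X. vs ! i = ws ! i) \<longrightarrow> vs = ws"
    and X: "X \<subseteq> {..<l}"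
  shows "card (sols t l \<phi>) \<le> card (nodes t) ^ card X"
proof -
  have finX: "finite X" using X finite_subset by blast
  define restrict where "restrict vs = map (\<lambda>i. vs ! i) (sorted_list_of_set X)" for vs :: "nat list list"
  have inj: "inj_on restrict (sols t l \<phi>)"
  proof (rule inj_onI)
    fix vs ws assume "vs \<in> sols t l \<phi>" "ws \<in> sols t l \<phi>" "restrict vs = restrict ws"
    moreover from this(3) have "\<forall>i\<in>X. vs ! i = ws ! i" using finX by (auto simp: restrict_def map_eq_conv)
    ultimately show "vs = ws" using uniq by blast
  qed
  have sub: "restrict ` sols t l \<phi> \<subseteq> {xs. set xs \<subseteq> nodes t \<and> length xs = card X}"
  proof clarify
    fix vs assume vs: "vs \<in> sols t l \<phi>"
    have "vs ! i \<in> nodes t" if "i \<in> X" for i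
    proof -
      have "i < length vs" "set vs \<subseteq> nodes t" using vs that X by (auto simp: sols_def tuples_def)
      then show ?thesis by (meson nth_mem subsetD)
    qed
    then show "set (restrict vs) \<subseteq> nodes t \<and> length (restrict vs) = card X"
      using finX by (auto simp: restrict_def)
  qed
  have "card (sols t l \<phi>) = card (restrict ` sols t l \<phi>)" using card_image[OF inj] by simp
  also have "\<dots> \<le> card {xs. set xs \<subseteq> nodes t \<and> length xs = card X}"
    by (rule card_mono[OF finite_lists_length_eq[OF finite_nodes] sub])
  also have "\<dots> = card (nodes t) ^ card X" by (rule card_lists_length_eq[OF finite_nodes])
  finally show ?thesis .
qed

lemma card_sols_le_all: "card (sols t l \<phi>) \<le> card (nodes t) ^ l"
proof -
  have "\<forall>vs\<in>sols t l \<phi>. \<forall>ws\<in>sols t l \<phi>. (\<forall>i\<in>{..<l}. vs ! i = ws ! i) \<longrightarrow> vs = ws"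
    by (auto simp: sols_def tuples_def intro!: nth_equalityI)
  then show ?thesis using card_sols_le[of t l \<phi> "{..<l}"] by simp
qed

lemma growth_set_bounded:
  assumes "\<And>t. t \<in> T \<Longrightarrow> card (sols t l \<phi>) \<le> card (nodes t) ^ k"
    and "x \<in> insert 0 {card (sols t l \<phi>) | t. t \<in> T \<and> card (nodes t) \<le> n}"
  shows "x \<le> n ^ k"
proof -
  consider "x = 0" | t where "t \<in> T" "card (nodes t) \<le> n" "x = card (sols t l \<phi>)" using assms(2) by blast
  then show ?thesis
  proof cases
    case 2
    then have "x \<le> card (nodes t) ^ k" using assms(1) by simp
    also have "\<dots> \<le> n ^ k" using 2(2) by (rule power_mono) simp
    finally show ?thesis .
  qed simp
qed

lemma finite_growth_set: "finite (insert 0 {card (sols t l \<phi>) | t. t \<in> T \<and> card (nodes t) \<le> n})"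
proof (rule finite_subset)
  show "insert 0 {card (sols t l \<phi>) | t. t \<in> T \<and> card (nodes t) \<le> n} \<subseteq> {..n ^ l}"
    using growth_set_bounded[of T l \<phi> l, OF card_sols_le_all] by (meson atMost_iff subsetI)
qed simp

lemma growth_le:
  assumes "\<And>t. t \<in> T \<Longrightarrow> card (sols t l \<phi>) \<le> card (nodes t) ^ k"
  shows "growth T l \<phi> n \<le> n ^ k"
  unfolding growth_def by (rule Max.boundedI[OF finite_growth_set insert_not_empty growth_set_bounded[OF assms]])

lemma card_sols_le_growth:
  assumes "t \<in> T" "card (nodes t) \<le> n"
  shows "card (sols t l \<phi>) \<le> growth T l \<phi> n"
  unfolding growth_def by (rule Max_ge[OF finite_growth_set]) (use assms in blast)

lemma bigtheta_power_if_bounds: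
  fixes f :: "nat \<Rightarrow> nat"
  assumes upper: "\<And>n. f n \<le> n ^ k" and C: "0 < C" and lower: "\<And>n. C \<le> n \<Longrightarrow> (n div C) ^ k \<le> f n"
  shows "(\<lambda>n. real (f n)) \<in> \<Theta>(\<lambda>n. real n ^ k)"
proof (rule bigthetaI')
  show "eventually (\<lambda>n. (1 / (2 * real C)) ^ k * norm (real n ^ k) \<le> norm (real (f n)) \<and>
      norm (real (f n)) \<le> 1 * norm (real n ^ k)) at_top"
  proof (rule eventually_at_top_linorderI)
    fix n assume n: "C \<le> n"
    have "n < n div C * C + C" using C by (metis div_mult_mod_eq add_less_cancel_left mod_less_divisor)
    also have "\<dots> \<le> 2 * (n div C) * C" using n C div_greater_zero_iff[of n C] by simp
    finally have "real n \<le> 2 * real (n div C) * real C" by (metis of_nat_le_iff of_nat_mult of_nat_numeral less_imp_le)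
    then have "real n / (2 * real C) \<le> real (n div C)" using C by (simp add: divide_le_eq mult.commute mult.left_commute)
    then have "(real n / (2 * real C)) ^ k \<le> real (n div C) ^ k" by (rule power_mono) simp
    also have "\<dots> \<le> real (f n)" using lower[OF n] by (metis of_nat_le_iff of_nat_power)
    finally have "(1 / (2 * real C)) ^ k * real n ^ k \<le> real (f n)" by (simp add: power_divide)
    moreover have "real (f n) \<le> real n ^ k" using upper by (metis of_nat_le_iff of_nat_power)
    ultimately show "(1 / (2 * real C)) ^ k * norm (real n ^ k) \<le> norm (real (f n)) \<and>
      norm (real (f n)) \<le> 1 * norm (real n ^ k)" by simp
  qed
qed (use C in simp_all)

section \<open>Determined variables and isolating runs\<close>

lemma run_down:
  fixes S :: "nat set"
  assumes "c \<in> S"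
  shows "\<exists>lo\<le>c. {lo..c} \<subseteq> S \<and> (0 < lo \<longrightarrow> lo - 1 \<notin> S)"
  using assms
proof (induction c)
  case (Suc c)
  show ?case
  proof (cases "c \<in> S")
    case True
    then obtain lo where "lo \<le> c" "{lo..c} \<subseteq> S" "0 < lo \<longrightarrow> lo - 1 \<notin> S" using Suc.IH by blast
    then show ?thesis using Suc.prems by (intro exI[of _ lo]) (auto simp: le_Suc_eq)
  qed (use Suc.prems in auto)
qed auto

lemma run_up:
  fixes S :: "nat set"
  assumes "c \<in> S" "finite S"
  shows "\<exists>hi\<ge>c. {c..hi} \<subseteq> S \<and> Suc hi \<notin> S"
  using assms
proof (induction "Max S - c" arbitrary: c rule: less_induct)
  case less
  show ?case
  proof (cases "Suc c \<in> S")
    case True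
    then have "Max S - Suc c < Max S - c" using less.prems Max_ge[of S "Suc c"] by linarith
    then obtain hi where "Suc c \<le> hi" "{Suc c..hi} \<subseteq> S" "Suc hi \<notin> S" using less True by blast
    moreover have "{c..hi} = insert c {Suc c..hi}" using \<open>Suc c \<le> hi\<close> by auto
    ultimately show ?thesis using less.prems by (intro exI[of _ hi]) auto
  qed (use less.prems in auto)
qed

lemma eq_along_run:
  assumes step: "\<And>c. lo \<le> c \<Longrightarrow> c < hi \<Longrightarrow> Q (Suc c) = Q c" and c: "c \<in> {lo..hi}"
  shows "Q c = Q lo"
proof -
  have "lo + d \<le> hi \<Longrightarrow> Q (lo + d) = Q lo" for d
    by (induction d) (use step in auto)
  from this[of "c - lo"] show ?thesis using c by simp
qed

lemma maximal_run:
  fixes S :: "nat set"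
  assumes "c \<in> S" "finite S"
  obtains lo hi where "lo \<le> c" "c \<le> hi" "{lo..hi} \<subseteq> S" "0 < lo \<longrightarrow> lo - 1 \<notin> S" "Suc hi \<notin> S"
proof -
  obtain lo where lo: "lo \<le> c" "{lo..c} \<subseteq> S" "0 < lo \<longrightarrow> lo - 1 \<notin> S" using run_down assms(1) by blast
  obtain hi where hi: "c \<le> hi" "{c..hi} \<subseteq> S" "Suc hi \<notin> S" using run_up assms by blast
  have "{lo..hi} \<subseteq> {lo..c} \<union> {c..hi}" by auto
  then show thesis using that lo hi by blast
qed

locale qf_type_witness =
  fixes R :: "'a rule set" and r :: 'a and l :: nat and \<phi> :: "'a qf"
    and t0 :: "'a ltree" and vs0 :: "nat list list"
  assumes qf_type: "qf_type (lang R r) l \<phi>" and t0_in_lang: "t0 \<in> lang R r" and vs0_sol: "vs0 \<in> sols t0 l \<phi>"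
begin

definition implied :: "'a qf \<Rightarrow> bool" where
  "implied \<psi> \<longleftrightarrow> (\<forall>t\<in>lang R r. \<forall>vs\<in>tuples t l. sat t vs \<phi> \<longrightarrow> sat t vs \<psi>)"

lemma implied_if_sat_vs0: "qf_vars \<psi> \<subseteq> {..<l} \<Longrightarrow> sat t0 vs0 \<psi> \<Longrightarrow> implied \<psi>"
  using qf_type t0_in_lang vs0_sol unfolding qf_type_def implied_def sols_def by blast

lemma length_vs0: "length vs0 = l"
  using vs0_sol by (simp add: sols_def tuples_def)

lemma skeleton_vs0_subset_nodes: "skeleton vs0 \<subseteq> nodes t0"
  using vs0_sol skeleton_subset_nodes by (auto simp: sols_def tuples_def)

text \<open>A term is determined by the variables in X if its value on solutions can be
  computed from theirs using atomic formulas implied by the type.\<close>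

inductive determined :: "nat set \<Rightarrow> trm \<Rightarrow> bool" for X where
  det_Var: "i \<in> X \<Longrightarrow> determined X (Var i)"
| det_Root: "determined X Root"
| det_Par: "determined X \<tau> \<Longrightarrow> determined X (Par \<tau>)"
| det_Eq: "determined X \<tau> \<Longrightarrow> implied (Eq \<tau> \<sigma>) \<Longrightarrow> determined X \<sigma>"
| det_LeftM: "determined X (Par \<sigma>) \<Longrightarrow> implied (LeftM \<sigma>) \<Longrightarrow> determined X \<sigma>"
| det_RightM: "determined X (Par \<sigma>) \<Longrightarrow> implied (RightM \<sigma>) \<Longrightarrow> determined X \<sigma>"
| det_SibSucc_right: "determined X \<tau> \<Longrightarrow> implied (SibSucc \<tau> \<sigma>) \<Longrightarrow> determined X \<sigma>"
| det_SibSucc_left: "determined X \<tau> \<Longrightarrow> implied (SibSucc \<sigma> \<tau>) \<Longrightarrow> determined X \<sigma>"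

lemma determined_mono_vars: "determined X \<tau> \<Longrightarrow> (\<forall>i\<in>X. determined Y (Var i)) \<Longrightarrow> determined Y \<tau>"
  by (induction rule: determined.induct) (auto intro: determined.intros)

lemma determined_Par_power: "determined X \<tau> \<Longrightarrow> determined X ((Par ^^ k) \<tau>)"
  by (induction k) (auto intro: det_Par)

lemma implied_sat:
  "implied \<psi> \<Longrightarrow> t \<in> lang R r \<Longrightarrow> vs \<in> sols t l \<phi> \<Longrightarrow> sat t vs \<psi>"
  by (auto simp: implied_def sols_def)

lemma eq_if_same_parent:
  "ev vs (Par \<sigma>) = ev ws (Par \<sigma>) \<Longrightarrow> ev vs \<sigma> = Some q \<Longrightarrow> ev ws \<sigma> = Some q' \<Longrightarrow>
   (q \<noteq> [] \<Longrightarrow> q' \<noteq> [] \<Longrightarrow> last q = last q') \<Longrightarrow> q = q'"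
  by (auto split: if_splits) (metis append_butlast_last_id)

lemma determined_ev_eq:
  assumes "determined X \<tau>" and X: "X \<subseteq> {..<l}" and t: "t \<in> lang R r"
    and vs: "vs \<in> sols t l \<phi>" and ws: "ws \<in> sols t l \<phi>" and agree: "\<forall>i\<in>X. vs ! i = ws ! i"
  shows "ev vs \<tau> = ev ws \<tau>"
  using assms(1)
proof induction
  case (det_Var i)
  then show ?case using X vs ws agree by (auto simp: sols_def tuples_def)
next
  case (det_Eq \<tau> \<sigma>)
  then show ?case using implied_sat[OF det_Eq.hyps(2) t vs] implied_sat[OF det_Eq.hyps(2) t ws]
    by (auto split: option.splits)
next
  case (det_LeftM \<sigma>)
  obtain q q' where q: "ev vs \<sigma> = Some q" "leftmost t q" "ev ws \<sigma> = Some q'" "leftmost t q'"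
    using implied_sat[OF det_LeftM.hyps(2) t vs] implied_sat[OF det_LeftM.hyps(2) t ws]
    by (auto split: option.splits)
  have "q = q'" by (rule eq_if_same_parent[OF det_LeftM.IH q(1) q(3)]) (use q in \<open>simp add: leftmost_def\<close>)
  then show ?case using q by simp
next
  case (det_RightM \<sigma>)
  obtain q q' where q: "ev vs \<sigma> = Some q" "rightmost t q" "ev ws \<sigma> = Some q'" "rightmost t q'"
    using implied_sat[OF det_RightM.hyps(2) t vs] implied_sat[OF det_RightM.hyps(2) t ws]
    by (auto split: option.splits)
  have "butlast q = butlast q'" using det_RightM.IH q(1,3) by (auto split: if_splits)
  with q have "q = q'" by (intro eq_if_same_parent[OF det_RightM.IH q(1) q(3)]) (simp add: rightmost_def)
  then show ?case using q by simp
next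
  case (det_SibSucc_right \<tau> \<sigma>)
  obtain p q p' q' where q: "ev vs \<tau> = Some p" "ev vs \<sigma> = Some q" "sib_succ t p q"
      "ev ws \<tau> = Some p'" "ev ws \<sigma> = Some q'" "sib_succ t p' q'"
    using implied_sat[OF det_SibSucc_right.hyps(2) t vs] implied_sat[OF det_SibSucc_right.hyps(2) t ws]
    by (auto split: option.splits)
  have "p = p'" using q det_SibSucc_right.IH by simp
  then have "q = q'" using q(3,6) sib_succ_right_unique by blast
  then show ?case using q by simp
next
  case (det_SibSucc_left \<tau> \<sigma>)
  obtain p q p' q' where q: "ev vs \<tau> = Some p" "ev vs \<sigma> = Some q" "sib_succ t q p"
      "ev ws \<tau> = Some p'" "ev ws \<sigma> = Some q'" "sib_succ t q' p'"
    using implied_sat[OF det_SibSucc_left.hyps(2) t vs] implied_sat[OF det_SibSucc_left.hyps(2) t ws]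
    by (auto split: option.splits)
  have "p = p'" using q det_SibSucc_left.IH by simp
  then have "q = q'" using q(3,6) sib_succ_left_unique by blast
  then show ?case using q by simp
qed simp_all

lemma solutions_agree:
  assumes X: "X \<subseteq> {..<l}" and det: "\<forall>i<l. determined X (Var i)"
  shows "\<forall>t\<in>lang R r. \<forall>vs\<in>sols t l \<phi>. \<forall>ws\<in>sols t l \<phi>. (\<forall>i\<in>X. vs ! i = ws ! i) \<longrightarrow> vs = ws"
proof (intro ballI impI)
  fix t vs ws assume t: "t \<in> lang R r" and vs: "vs \<in> sols t l \<phi>" and ws: "ws \<in> sols t l \<phi>"
    and agree: "\<forall>i\<in>X. vs ! i = ws ! i"
  have "ev vs (Var i) = ev ws (Var i)" if "i < l" for i
    using determined_ev_eq[OF _ X t vs ws agree] det that by blast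
  then show "vs = ws" using vs ws by (intro nth_equalityI) (auto simp: sols_def tuples_def)
qed

lemma minimal_determining_set:
  obtains X where "X \<subseteq> {..<l}" "\<forall>i<l. determined X (Var i)" "\<forall>i\<in>X. \<not> determined (X - {i}) (Var i)"
proof -
  let ?P = "\<lambda>X. X \<subseteq> {..<l} \<and> (\<forall>i<l. determined X (Var i))"
  obtain X where X: "?P X" and min: "\<And>Y. ?P Y \<Longrightarrow> card X \<le> card Y"
    using ex_has_least_nat[of ?P "{..<l}" card] by (auto intro: det_Var)
  have "\<not> determined (X - {i}) (Var i)" if i: "i \<in> X" for i
  proof
    assume "determined (X - {i}) (Var i)"
    then have "\<forall>k\<in>X. determined (X - {i}) (Var k)" by (auto intro: det_Var)
    then have "?P (X - {i})" using X determined_mono_vars by blast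
    moreover have "finite X" using X finite_subset by blast
    ultimately show False using min[of "X - {i}"] i card_Diff1_less by fastforce
  qed
  then show thesis using that X by blast
qed

definition determined_node :: "nat set \<Rightarrow> nat list \<Rightarrow> bool" where
  "determined_node Z q \<longleftrightarrow> (\<exists>\<tau>. trm_vars \<tau> \<subseteq> {..<l} \<and> ev vs0 \<tau> = Some q \<and> determined Z \<tau>)"

lemma determined_node_term:
  assumes "determined_node Z q" "trm_vars \<sigma> \<subseteq> {..<l}" "ev vs0 \<sigma> = Some q"
  shows "determined Z \<sigma>"
proof -
  obtain \<tau> where \<tau>: "trm_vars \<tau> \<subseteq> {..<l}" "ev vs0 \<tau> = Some q" "determined Z \<tau>"
    using assms(1) by (auto simp: determined_node_def)
  have "implied (Eq \<tau> \<sigma>)" by (rule implied_if_sat_vs0) (use assms \<tau> in auto)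
  then show ?thesis using det_Eq \<tau>(3) by blast
qed

lemma skeleton_vs0_term:
  "q \<in> skeleton vs0 \<Longrightarrow> \<exists>\<tau>. trm_vars \<tau> \<subseteq> {..<l} \<and> ev vs0 \<tau> = Some q"
  using skeleton_term length_vs0 by metis

lemma determined_node_Nil: "determined_node Z []"
  using det_Root by (force simp: determined_node_def)

lemma determined_node_ancestor:
  assumes "j \<in> Z" "j < l" "prefix q (vs0 ! j)"
  shows "determined_node Z q"
proof -
  let ?\<tau> = "(Par ^^ (length (vs0 ! j) - length q)) (Var j)"
  have "ev vs0 ?\<tau> = Some q" using ev_Par_power_prefix assms length_vs0 by simp
  moreover have "determined Z ?\<tau>" using assms(1) by (intro determined_Par_power det_Var)
  moreover have "trm_vars ?\<tau> \<subseteq> {..<l}" using assms(2) by (simp add: trm_vars_Par_power)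
  ultimately show ?thesis unfolding determined_node_def by blast
qed

lemma determined_node_sibling_iff:
  assumes "p @ [c] \<in> skeleton vs0" "p @ [Suc c] \<in> skeleton vs0"
  shows "determined_node Z (p @ [Suc c]) = determined_node Z (p @ [c])"
proof -
  obtain \<tau> where \<tau>: "trm_vars \<tau> \<subseteq> {..<l}" "ev vs0 \<tau> = Some (p @ [c])"
    using skeleton_vs0_term assms(1) by blast
  obtain \<sigma> where \<sigma>: "trm_vars \<sigma> \<subseteq> {..<l}" "ev vs0 \<sigma> = Some (p @ [Suc c])"
    using skeleton_vs0_term assms(2) by blast
  have "sat t0 vs0 (SibSucc \<tau> \<sigma>)"
    using assms skeleton_vs0_subset_nodes \<tau>(2) \<sigma>(2) by (auto simp: sib_succ_def)
  then have imp: "implied (SibSucc \<tau> \<sigma>)" using \<tau>(1) \<sigma>(1) by (intro implied_if_sat_vs0) auto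
  show ?thesis
  proof
    assume "determined_node Z (p @ [Suc c])"
    then have "determined Z \<tau>" using determined_node_term \<sigma> det_SibSucc_left[OF _ imp] by blast
    then show "determined_node Z (p @ [c])" using \<tau> by (auto simp: determined_node_def)
  next
    assume "determined_node Z (p @ [c])"
    then have "determined Z \<sigma>" using determined_node_term \<tau> det_SibSucc_right[OF _ imp] by blast
    then show "determined_node Z (p @ [Suc c])" using \<sigma> by (auto simp: determined_node_def)
  qed
qed

lemma determined_node_first_child:
  assumes "determined_node Z p" "p @ [0] \<in> skeleton vs0"
  shows "determined_node Z (p @ [0])"
proof -
  obtain \<tau> where \<tau>: "trm_vars \<tau> \<subseteq> {..<l}" "ev vs0 \<tau> = Some (p @ [0])"
    using skeleton_vs0_term assms(2) by blast
  have "determined Z (Par \<tau>)" using determined_node_term[OF assms(1)] \<tau> by simp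
  moreover have "sat t0 vs0 (LeftM \<tau>)"
    using \<tau>(2) assms(2) skeleton_vs0_subset_nodes by (auto simp: leftmost_def)
  then have "implied (LeftM \<tau>)" using \<tau>(1) by (intro implied_if_sat_vs0) auto
  ultimately show ?thesis using det_LeftM \<tau> by (auto simp: determined_node_def)
qed

lemma determined_node_last_child:
  assumes "determined_node Z p" "p @ [c] \<in> skeleton vs0" "Suc c = nchildren t0 p"
  shows "determined_node Z (p @ [c])"
proof -
  obtain \<tau> where \<tau>: "trm_vars \<tau> \<subseteq> {..<l}" "ev vs0 \<tau> = Some (p @ [c])"
    using skeleton_vs0_term assms(2) by blast
  have "determined Z (Par \<tau>)" using determined_node_term[OF assms(1)] \<tau> by simp
  moreover have "sat t0 vs0 (RightM \<tau>)"
    using \<tau>(2) assms(2,3) skeleton_vs0_subset_nodes by (auto simp: rightmost_def)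
  then have "implied (RightM \<tau>)" using \<tau>(1) by (intro implied_if_sat_vs0) auto
  ultimately show ?thesis using det_RightM \<tau> by (auto simp: determined_node_def)
qed

lemma undetermined_child_on_path:
  assumes "i < l" "\<not> determined Z (Var i)"
  obtains p c where "prefix (p @ [c]) (vs0 ! i)" "determined_node Z p" "\<not> determined_node Z (p @ [c])"
proof -
  let ?Q = "\<lambda>k. \<not> determined_node Z (take k (vs0 ! i))"
  have "ev vs0 (Var i) = Some (vs0 ! i)" using assms(1) length_vs0 by simp
  then have "?Q (length (vs0 ! i))" using assms determined_node_term[of Z "vs0 ! i" "Var i"] by auto
  moreover have "\<not> ?Q 0" using determined_node_Nil by simp
  ultimately obtain k where k: "k < length (vs0 ! i)" "\<not> ?Q k" "?Q (Suc k)"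
    using ex_least_nat_less[of ?Q] by blast
  have "take (Suc k) (vs0 ! i) = take k (vs0 ! i) @ [vs0 ! i ! k]" using k(1) by (simp add: take_Suc_conv_app_nth)
  moreover have "prefix (take (Suc k) (vs0 ! i)) (vs0 ! i)" by (rule take_is_prefix)
  ultimately show thesis using that[of "take k (vs0 ! i)" "vs0 ! i ! k"] k(2,3) by simp
qed

definition isolating :: "nat set \<Rightarrow> nat \<Rightarrow> nat list \<Rightarrow> nat \<Rightarrow> nat \<Rightarrow> bool" where
  "isolating X i p a g \<longleftrightarrow> 1 \<le> a \<and> 1 \<le> g \<and> a + g < nchildren t0 p \<and>
     (\<exists>c. a \<le> c \<and> c < a + g \<and> prefix (p @ [c]) (vs0 ! i)) \<and>
     p @ [a - 1] \<notin> skeleton vs0 \<and> p @ [a + g] \<notin> skeleton vs0 \<and>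
     (\<forall>j\<in>X - {i}. \<forall>c. a \<le> c \<longrightarrow> c < a + g \<longrightarrow> \<not> prefix (p @ [c]) (vs0 ! j)) \<and>
     (\<forall>c. a \<le> c \<longrightarrow> c < a + g \<longrightarrow> p @ [c] \<in> skeleton vs0)"

lemma undetermined_run:
  assumes run: "\<forall>c\<in>{lo..hi}. p @ [c] \<in> skeleton vs0"
    and c0: "c0 \<in> {lo..hi}" "\<not> determined_node Z (p @ [c0])" and c: "c \<in> {lo..hi}"
  shows "\<not> determined_node Z (p @ [c])"
proof -
  have "determined_node Z (p @ [d]) = determined_node Z (p @ [lo])" if "d \<in> {lo..hi}" for d
  proof (rule eq_along_run[OF _ that])
    fix d assume "lo \<le> d" "d < hi"
    then have "p @ [d] \<in> skeleton vs0" "p @ [Suc d] \<in> skeleton vs0" using run by auto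
    then show "determined_node Z (p @ [Suc d]) = determined_node Z (p @ [d])"
      by (rule determined_node_sibling_iff)
  qed
  then show ?thesis using c0 c by metis
qed

lemma undetermined_run_inner:
  assumes det_p: "determined_node Z p" and run: "\<forall>c\<in>{lo..hi}. p @ [c] \<in> skeleton vs0" and "lo \<le> hi"
    and undet: "\<forall>c\<in>{lo..hi}. \<not> determined_node Z (p @ [c])"
  shows "0 < lo" "Suc hi < nchildren t0 p"
proof -
  show "0 < lo"
  proof (rule ccontr)
    assume "\<not> 0 < lo"
    then have "0 \<in> {lo..hi}" by simp
    then have "determined_node Z (p @ [0])" using determined_node_first_child[OF det_p] run by blast
    then show False using undet \<open>0 \<in> {lo..hi}\<close> by blast
  qed
  have hi: "hi \<in> {lo..hi}" using \<open>lo \<le> hi\<close> by simp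
  then have hi_skel: "p @ [hi] \<in> skeleton vs0" using run by blast
  then have "hi < nchildren t0 p" using skeleton_vs0_subset_nodes child_less_nchildren by blast
  moreover have "Suc hi \<noteq> nchildren t0 p"
    using determined_node_last_child[OF det_p hi_skel] undet hi by blast
  ultimately show "Suc hi < nchildren t0 p" by linarith
qed

lemma isolating_exists:
  assumes X: "X \<subseteq> {..<l}" and i: "i \<in> X" and undet: "\<not> determined (X - {i}) (Var i)"
  shows "\<exists>p a g. isolating X i p a g"
proof -
  let ?Z = "X - {i}"
  have il: "i < l" using i X by blast
  obtain p c0 where path: "prefix (p @ [c0]) (vs0 ! i)" and det_p: "determined_node ?Z p"
    and undet_c0: "\<not> determined_node ?Z (p @ [c0])"
    using undetermined_child_on_path[OF il undet] by blast
  define S where "S = {c. p @ [c] \<in> skeleton vs0}"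
  have "vs0 ! i \<in> skeleton vs0" using il length_vs0 nth_in_skeleton by simp
  then have "c0 \<in> S" using path skeleton_prefix_closed by (auto simp: S_def)
  moreover have "S \<subseteq> {..<nchildren t0 p}"
    using skeleton_vs0_subset_nodes child_less_nchildren by (auto simp: S_def)
  then have "finite S" by (rule finite_subset) simp
  ultimately obtain lo hi where run: "lo \<le> c0" "c0 \<le> hi" "{lo..hi} \<subseteq> S"
    and lo: "0 < lo \<longrightarrow> lo - 1 \<notin> S" and hi: "Suc hi \<notin> S"
    by (rule maximal_run)
  have in_skel: "\<forall>c\<in>{lo..hi}. p @ [c] \<in> skeleton vs0" using run(3) unfolding S_def by blast
  have undet_run: "\<forall>c\<in>{lo..hi}. \<not> determined_node ?Z (p @ [c])"
    using undetermined_run[OF in_skel _ undet_c0] run(1,2) by simp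
  have others: "\<not> prefix (p @ [c]) (vs0 ! j)" if "j \<in> ?Z" "c \<in> {lo..hi}" for j c
    using determined_node_ancestor[OF that(1)] undet_run that X by blast
  have "lo + (Suc hi - lo) = Suc hi" using run(1,2) by simp
  then have "isolating X i p lo (Suc hi - lo)"
    unfolding isolating_def
    using undetermined_run_inner[OF det_p in_skel _ undet_run] others in_skel path run lo hi
    by (simp add: S_def less_Suc_eq_le) (use run(1,2) in \<open>auto intro!: exI[of _ c0]\<close>)
  then show ?thesis by blast
qed

lemma isolating_choice:
  assumes "X \<subseteq> {..<l}" "\<forall>i\<in>X. \<not> determined (X - {i}) (Var i)"
  obtains P A G where "\<And>i. i \<in> X \<Longrightarrow> isolating X i (P i) (A i) (G i)"
proof -
  have "\<forall>i\<in>X. \<exists>pag. isolating X i (fst pag) (fst (snd pag)) (snd (snd pag))"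
    using isolating_exists assms by fastforce
  then obtain f where "\<forall>i\<in>X. isolating X i (fst (f i)) (fst (snd (f i))) (snd (snd (f i)))"
    by (rule bchoice[THEN exE])
  then show thesis using that[of "\<lambda>i. fst (f i)" "\<lambda>i. fst (snd (f i))" "\<lambda>i. snd (snd (f i))"] by blast
qed

end

section \<open>Pumping all isolating runs\<close>

lemma less_append_Cons: "(xs :: 'a :: linorder list) < xs @ c # v"
  by (induction xs) auto

lemma less_append_Cons_Cons: "(c1 :: 'a :: linorder) < c2 \<Longrightarrow> u @ c1 # v < u @ c2 # w"
  by (induction u) auto

locale isolating_runs = qf_type_witness +
  fixes X :: "nat set" and P :: "nat \<Rightarrow> nat list" and A G :: "nat \<Rightarrow> nat"
  assumes X_subset: "X \<subseteq> {..<l}" and run_isolating: "\<And>i. i \<in> X \<Longrightarrow> isolating X i (P i) (A i) (G i)"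
begin

lemma finite_X: "finite X"
  using X_subset finite_subset by blast

lemma run_bounds: "i \<in> X \<Longrightarrow> 1 \<le> A i \<and> 1 \<le> G i \<and> A i + G i < nchildren t0 (P i)"
  using run_isolating by (simp add: isolating_def)

lemma run_path: "i \<in> X \<Longrightarrow> \<exists>c. A i \<le> c \<and> c < A i + G i \<and> prefix (P i @ [c]) (vs0 ! i)"
  using run_isolating by (simp add: isolating_def)

lemma run_borders: "i \<in> X \<Longrightarrow> P i @ [A i - 1] \<notin> skeleton vs0 \<and> P i @ [A i + G i] \<notin> skeleton vs0"
  using run_isolating by (simp add: isolating_def)

lemma run_excludes:
  "i \<in> X \<Longrightarrow> j \<in> X \<Longrightarrow> j \<noteq> i \<Longrightarrow> A i \<le> c \<Longrightarrow> c < A i + G i \<Longrightarrow> \<not> prefix (P i @ [c]) (vs0 ! j)"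
  using run_isolating by (simp add: isolating_def)

lemma run_in_skeleton: "i \<in> X \<Longrightarrow> A i \<le> c \<Longrightarrow> c < A i + G i \<Longrightarrow> P i @ [c] \<in> skeleton vs0"
  using run_isolating by (simp add: isolating_def)

text \<open>The runs are pumped in decreasing order of their keys: this order guarantees that
  pumping one run does not move the runs that remain to be pumped.\<close>

definition key where "key i = P i @ [A i]"
definition region where "region u = {q. \<exists>c\<ge>A u. prefix (P u @ [c]) q}"

lemma runs_disjoint:
  assumes u: "u \<in> X" and w: "w \<in> X" and uw: "u \<noteq> w" and P: "P u = P w"
  shows "A u + G u < A w \<or> A w + G w < A u"
proof -
  obtain cu where cu: "A u \<le> cu" "cu < A u + G u" "prefix (P u @ [cu]) (vs0 ! u)"
    using run_path[OF u] by blast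
  have n1: "\<not> (A w \<le> cu \<and> cu < A w + G w)" using run_excludes[OF w u uw, of cu] cu P by auto
  have n2: "\<not> (A w \<le> c \<and> c < A w + G w)" if "c = A u - 1 \<or> c = A u + G u" for c
    using run_in_skeleton[OF w, of c] run_borders[OF u] P that by auto
  have n3: "\<not> (A u \<le> c \<and> c < A u + G u)" if "c = A w - 1 \<or> c = A w + G w" for c
    using run_in_skeleton[OF u, of c] run_borders[OF w] P that by auto
  show ?thesis using run_bounds[OF u] run_bounds[OF w] cu n1 n2[of "A u - 1"] n2[of "A u + G u"]
      n3[of "A w - 1"] n3[of "A w + G w"]
    by linarith
qed

lemma key_less_if_ne:
  assumes "u \<in> X" "w \<in> X" "u \<noteq> w" "key w \<le> key u"
  shows "key w < key u"
  using runs_disjoint[OF assms(1-3)] assms(4) by (auto simp: key_def order.order_iff_strict)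

lemma slice_notin_region:
  assumes u: "u \<in> X" and w: "w \<in> X" and uw: "u \<noteq> w" and kw: "key w < key u" and c: "c \<le> A w + G w"
  shows "P w @ [c] \<notin> region u"
proof
  assume "P w @ [c] \<in> region u"
  then obtain c' where c': "A u \<le> c'" and pr: "prefix (P u @ [c']) (P w @ [c])" by (auto simp: region_def)
  from pr have "P u @ [c'] = P w @ [c] \<or> prefix (P u @ [c']) (P w)" by simp
  then show False
  proof
    assume e: "P u @ [c'] = P w @ [c]"
    then have P: "P u = P w" and "c' = c" by auto
    from runs_disjoint[OF u w uw P] show False
    proof
      assume "A u + G u < A w"
      then have "key u < key w" unfolding key_def using P less_append_Cons_Cons[of "A u" "A w" "P w" "[]" "[]"] by simp
      then show False using kw by simp
    qed (use c' c \<open>c' = c\<close> in simp)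
  next
    assume "prefix (P u @ [c']) (P w)"
    then obtain z where z: "P w = P u @ c' # z" by (auto simp: prefix_def)
    have "key u < key w"
    proof (cases "c' = A u")
      case True then show ?thesis unfolding key_def using z less_append_Cons[of "P u @ [A u]"]
        by (cases z) (simp_all add: less_append_Cons)
    next
      case False then have "A u < c'" using c' by simp
      then show ?thesis unfolding key_def using z less_append_Cons_Cons[of "A u" c' "P u" "[]" "z @ [A w]"] by simp
    qed
    then show False using kw by simp
  qed
qed

lemma parent_not_below_slice:
  assumes u: "u \<in> X" and w: "w \<in> X" and uw: "u \<noteq> w" and kw: "key w < key u"
    and c: "A w - 1 \<le> c" "c < A w + G w"
  shows "\<not> prefix (P w @ [c]) (P u)"
proof
  assume "prefix (P w @ [c]) (P u)"
  then obtain z where z: "P u = P w @ c # z" by (auto simp: prefix_def)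
  show False
  proof (cases "c < A w")
    case True
    then have "key u < key w" unfolding key_def using z less_append_Cons_Cons[of c "A w" "P w" "z @ [A u]" "[]"] by simp
    then show False using kw by simp
  next
    case False
    obtain cu where "prefix (P u @ [cu]) (vs0 ! u)" using run_path[OF u] by blast
    then have "prefix (P w @ [c]) (vs0 ! u)" using z by (auto simp: prefix_def)
    then show False using run_excludes[OF w u uw, of c] False c by simp
  qed
qed

lemma parent_notin_region:
  "u \<in> X \<Longrightarrow> w \<in> X \<Longrightarrow> u \<noteq> w \<Longrightarrow> key w < key u \<Longrightarrow> P w \<notin> region u"
  using slice_notin_region[of u w "A w"] by (auto simp: region_def intro: prefix_order.trans)

lemma var_notin_region:
  assumes u: "u \<in> X" and w: "w \<in> X" and uw: "u \<noteq> w" and kw: "key w < key u"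
  shows "vs0 ! w \<notin> region u"
proof
  assume "vs0 ! w \<in> region u"
  then obtain c' where c': "A u \<le> c'" "prefix (P u @ [c']) (vs0 ! w)" by (auto simp: region_def)
  obtain cw where cw: "A w \<le> cw" "cw < A w + G w" "prefix (P w @ [cw]) (vs0 ! w)"
    using run_path[OF w] by blast
  have "P w @ [cw] \<notin> region u" using slice_notin_region[OF u w uw kw] cw(2) by simp
  then have "\<not> prefix (P u @ [c']) (P w @ [cw])" using c'(1) by (auto simp: region_def)
  moreover have "\<not> prefix (P w @ [cw]) (P u)" using parent_not_below_slice[OF u w uw kw] cw by simp
  ultimately show False using prefix_same_cases[OF c'(2) cw(3)] by (auto simp: prefix_Cons)
qed

text \<open>Invariants while the runs are pumped one at a time: the runs still to be pumped keep
  their subtrees, and the solutions keep their variables of X there.\<close>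

definition intact :: "'a ltree \<Rightarrow> nat set \<Rightarrow> bool" where
  "intact t Y \<longleftrightarrow> (\<forall>w\<in>Y. A w + G w < nchildren t (P w) \<and>
     (\<forall>c. A w - 1 \<le> c \<longrightarrow> c < A w + G w \<longrightarrow> subt t (P w @ [c]) = subt t0 (P w @ [c])))"

definition compatible :: "nat list list set \<Rightarrow> nat set \<Rightarrow> bool" where
  "compatible F Y \<longleftrightarrow> (\<forall>ws\<in>F. \<forall>w\<in>Y. ws ! w = vs0 ! w \<and>
     P w @ [A w - 1] \<notin> skeleton ws \<and> P w @ [A w + G w] \<notin> skeleton ws)"

lemma pumped_region_eq_region: "star_pump t (P u) b cs (A u) (G u) m \<Longrightarrow>
    star_pump.pumped_region (P u) (A u) = region u"
  by (simp add: star_pump.pumped_region_def region_def)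

lemma intact_after_pump:
  assumes pump: "star_pump t (P u) b cs (A u) (G u) m" and Y: "Y \<subseteq> X" and u: "u \<in> Y"
    and kmax: "\<forall>w\<in>Y. key w \<le> key u" and intact: "intact t Y"
  shows "intact (star_pump.pumped t (P u) b cs (A u) (G u) m) (Y - {u})"
  unfolding intact_def
proof (intro ballI conjI allI impI)
  interpret pm: star_pump t "P u" b cs "A u" "G u" m by (fact pump)
  fix w assume w: "w \<in> Y - {u}"
  then have wX: "w \<in> X" "u \<noteq> w" using Y by auto
  have kw: "key w < key u" using key_less_if_ne[of u w] wX u Y kmax w by blast
  have "P w \<notin> pm.pumped_region" using parent_notin_region wX kw Y u pumped_region_eq_region[OF pump] by blast
  then have "nchildren t (P w) \<le> nchildren pm.pumped (P w)" by (rule pm.nchildren_outside_region)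
  then show "A w + G w < nchildren pm.pumped (P w)" using intact w by (auto simp: intact_def)
  fix c assume c: "A w - 1 \<le> c" "c < A w + G w"
  have "P w @ [c] \<notin> pm.pumped_region"
    using slice_notin_region[of u w c] wX kw Y u c pumped_region_eq_region[OF pump] by auto
  moreover have "\<not> prefix (P w @ [c]) (P u)" using parent_not_below_slice[of u w c] wX kw Y u c by blast
  ultimately have "subt pm.pumped (P w @ [c]) = subt t (P w @ [c])" by (rule pm.subt_outside_region)
  then show "subt pm.pumped (P w @ [c]) = subt t0 (P w @ [c])" using intact w c by (auto simp: intact_def)
qed

lemma compatible_after_pump:
  assumes pump: "star_pump t (P u) b cs (A u) (G u) m" and Y: "Y \<subseteq> X" and u: "u \<in> Y"
    and kmax: "\<forall>w\<in>Y. key w \<le> key u" and F: "F \<subseteq> sols t l \<phi>" and resp: "compatible F Y"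
  shows "compatible (star_pump.shifted (P u) (A u) (G u) m F) (Y - {u})"
  unfolding compatible_def
proof (intro ballI)
  interpret pm: star_pump t "P u" b cs "A u" "G u" m by (fact pump)
  fix vs w assume vs: "vs \<in> pm.shifted F" and w: "w \<in> Y - {u}"
  then obtain j ws where j: "j < m" and ws: "ws \<in> F" and vs: "vs = map (pm.shift j) ws"
    by (auto simp: pm.shifted_def)
  have wX: "w \<in> X" "u \<noteq> w" using w Y by auto
  have kw: "key w < key u" using key_less_if_ne[of u w] wX u Y kmax w by blast
  have notin: "q \<notin> skeleton vs" if "q \<notin> region u" "q \<notin> skeleton ws" for q
  proof
    assume "q \<in> skeleton vs"
    then obtain q' where "q' \<in> skeleton ws" "q = pm.shift j q'" using pm.skeleton_map_shift vs by blast
    moreover have "pm.shift j q = q" using pm.shift_outside_region that(1) pumped_region_eq_region[OF pump] by blast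
    ultimately show False using that(2) pm.inj_shift[OF j] by (metis injD)
  qed
  have "w < length ws" using F ws wX X_subset by (auto simp: sols_def tuples_def)
  moreover have "vs0 ! w \<notin> region u" using var_notin_region wX kw Y u by blast
  ultimately have "vs ! w = vs0 ! w"
    using vs resp ws w pm.shift_outside_region pumped_region_eq_region[OF pump] by (auto simp: compatible_def)
  moreover have "P w @ [c] \<notin> region u" if "c \<le> A w + G w" for c
    using slice_notin_region[of u w c] wX kw Y u that by blast
  ultimately show "vs ! w = vs0 ! w \<and> P w @ [A w - 1] \<notin> skeleton vs \<and> P w @ [A w + G w] \<notin> skeleton vs"
    using notin resp ws w by (auto simp: compatible_def)
qed

lemma num_nodes_pumped_intact:
  assumes pump: "star_pump t (P u) b cs (A u) (G u) m" and u: "u \<in> Y" and Y: "Y \<subseteq> X"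
    and intact: "intact t Y"
  shows "num_nodes (star_pump.pumped t (P u) b cs (A u) (G u) m) \<le> num_nodes t + m * num_nodes t0"
proof -
  interpret pm: star_pump t "P u" b cs "A u" "G u" m by (fact pump)
  have bounds: "1 \<le> A u" "1 \<le> G u" "A u + G u < nchildren t0 (P u)" using run_bounds u Y by auto
  obtain b0 cs0 where "subt t0 (P u) = Some (Nd b0 cs0)" "length cs0 = nchildren t0 (P u)"
    using subt_nchildren[of t0 "P u"] bounds by auto
  then interpret p0: star_pump t0 "P u" b0 cs0 "A u" "G u" m
    using bounds pm.m_pos by unfold_locales auto
  have "pm.block_size = p0.block_size"
    unfolding pm.block_size_def p0.block_size_def
  proof (rule sum.cong)
    fix c assume c: "c \<in> {A u - 1..<A u + G u}"
    have "Some (cs ! c) = subt t (P u @ [c])" using pm.subt_below_p c pm.block_in_kids by simp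
    also have "\<dots> = subt t0 (P u @ [c])" using intact u c by (simp add: intact_def)
    also have "\<dots> = Some (cs0 ! c)" using p0.subt_below_p c p0.block_in_kids by simp
    finally show "num_nodes (cs ! c) = num_nodes (cs0 ! c)" by simp
  qed simp
  then have "m * pm.block_size \<le> m * num_nodes t0" using p0.block_size_le by simp
  then show ?thesis using pm.num_nodes_pumped by linarith
qed

lemma pump_one_run:
  assumes m: "1 \<le> m" and Y: "Y \<subseteq> X" and u: "u \<in> Y" and kmax: "\<forall>w\<in>Y. key w \<le> key u"
    and t: "t \<in> lang R r" and F: "finite F" "F \<subseteq> sols t l \<phi>"
    and intact: "intact t Y" and comp: "compatible F Y"
  shows "\<exists>t' F'. t' \<in> lang R r \<and> finite F' \<and> F' \<subseteq> sols t' l \<phi> \<and> card F' = m * card F \<and>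
     num_nodes t' \<le> num_nodes t + m * num_nodes t0 \<and> intact t' (Y - {u}) \<and> compatible F' (Y - {u})"
proof -
  have uX: "u \<in> X" using Y u by blast
  have bounds: "1 \<le> A u" "1 \<le> G u" "A u + G u < nchildren t0 (P u)" using run_bounds[OF uX] by auto
  have "A u + G u < nchildren t (P u)" using intact u by (simp add: intact_def)
  then obtain b cs where "subt t (P u) = Some (Nd b cs)" "length cs = nchildren t (P u)"
    using subt_nchildren[of t "P u"] by auto
  then interpret pm: star_pump t "P u" b cs "A u" "G u" m
    using bounds m \<open>A u + G u < nchildren t (P u)\<close> by unfold_locales auto
  have size: "num_nodes pm.pumped \<le> num_nodes t + m * num_nodes t0"
    by (rule num_nodes_pumped_intact[OF pm.star_pump_axioms u Y intact])
  obtain c0 where c0: "A u \<le> c0" "c0 < A u + G u" "prefix (P u @ [c0]) (vs0 ! u)"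
    using run_path[OF uX] by blast
  have "u < length ws \<and> ws ! u = vs0 ! u" if "ws \<in> F" for ws
    using that F(2) comp u uX X_subset by (auto simp: sols_def tuples_def compatible_def)
  then have "card (pm.shifted F) = m * card F" by (intro pm.card_shifted[OF F(1) _ c0(3,1,2)])
  moreover have "pm.shifted F \<subseteq> sols pm.pumped l \<phi>"
    using comp u by (intro pm.shifted_sols[OF F(2)]) (auto simp: compatible_def)
  moreover have "finite (pm.shifted F)" using F(1) by (simp add: pm.shifted_def)
  ultimately show ?thesis
    using pm.pumped_in_lang[OF t] size
      intact_after_pump[OF pm.star_pump_axioms Y u kmax intact]
      compatible_after_pump[OF pm.star_pump_axioms Y u kmax F(2) comp]
    by blast
qed

lemma pump_runs:
  assumes m: "1 \<le> m"
  shows "card Y = n \<Longrightarrow> Y \<subseteq> X \<Longrightarrow> t \<in> lang R r \<Longrightarrow> finite F \<Longrightarrow> F \<subseteq> sols t l \<phi> \<Longrightarrow>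
    intact t Y \<Longrightarrow> compatible F Y \<Longrightarrow>
    \<exists>t' F'. t' \<in> lang R r \<and> F' \<subseteq> sols t' l \<phi> \<and> card F' = m ^ n * card F \<and>
      num_nodes t' \<le> num_nodes t + n * m * num_nodes t0"
proof (induction n arbitrary: Y t F)
  case 0
  then show ?case by auto
next
  case (Suc n)
  have fY: "finite Y" using Suc.prems(2) finite_X finite_subset by blast
  have "key ` Y \<noteq> {}" using Suc.prems(1) by auto
  then have "Max (key ` Y) \<in> key ` Y" using fY by (intro Max_in) auto
  then obtain u where u: "u \<in> Y" "key u = Max (key ` Y)" by auto
  then have kmax: "\<forall>w\<in>Y. key w \<le> key u" using fY by simp
  obtain t1 F1 where t1: "t1 \<in> lang R r" "finite F1" "F1 \<subseteq> sols t1 l \<phi>" "card F1 = m * card F"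
      "num_nodes t1 \<le> num_nodes t + m * num_nodes t0" "intact t1 (Y - {u})" "compatible F1 (Y - {u})"
    using pump_one_run[OF m Suc.prems(2) u(1) kmax Suc.prems(3-7)] by blast
  have "card (Y - {u}) = n" using Suc.prems(1) u(1) fY by simp
  moreover have "Y - {u} \<subseteq> X" using Suc.prems(2) by blast
  ultimately obtain t2 F2 where t2: "t2 \<in> lang R r" "F2 \<subseteq> sols t2 l \<phi>" "card F2 = m ^ n * card F1"
      "num_nodes t2 \<le> num_nodes t1 + n * m * num_nodes t0"
    using Suc.IH[of "Y - {u}" t1 F1] t1(1,2,3,6,7) by blast
  have "card F2 = m ^ Suc n * card F" using t2(3) t1(4) by simp
  moreover have "num_nodes t2 \<le> num_nodes t + Suc n * m * num_nodes t0"
    using t2(4) t1(5) by (simp add: algebra_simps)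
  ultimately show ?case using t2(1,2) by blast
qed

lemma large_solution_family:
  assumes "1 \<le> m"
  obtains t F where "t \<in> lang R r" "F \<subseteq> sols t l \<phi>" "card F = m ^ card X"
    "num_nodes t \<le> (card X + 1) * m * num_nodes t0"
proof -
  have "intact t0 X" using run_bounds by (simp add: intact_def)
  moreover have "compatible {vs0} X" using run_borders by (simp add: compatible_def)
  moreover have "{vs0} \<subseteq> sols t0 l \<phi>" using vs0_sol by simp
  ultimately obtain t F where t: "t \<in> lang R r" "F \<subseteq> sols t l \<phi>" "card F = m ^ card X * card {vs0}"
      "num_nodes t \<le> num_nodes t0 + card X * m * num_nodes t0"
    using pump_runs[OF assms refl order_refl t0_in_lang, of "{vs0}"] by blast
  have "num_nodes t0 + card X * m * num_nodes t0 \<le> (card X + 1) * m * num_nodes t0"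
    using assms by (simp add: algebra_simps)
  then show thesis using that[OF t(1,2)] t(3,4) by simp
qed

lemma growth_lower_bound:
  assumes C: "C = (card X + 1) * num_nodes t0" and n: "C \<le> n"
  shows "(n div C) ^ card X \<le> growth (lang R r) l \<phi> n"
proof -
  define m where "m = n div C"
  have "0 < C" using C num_nodes_pos[of t0] by simp
  then have m: "1 \<le> m" using n div_greater_zero_iff[of n C] by (simp add: m_def)
  obtain t F where t: "t \<in> lang R r" "F \<subseteq> sols t l \<phi>" "card F = m ^ card X"
      and size: "num_nodes t \<le> (card X + 1) * m * num_nodes t0"
    using large_solution_family[OF m] by blast
  have "num_nodes t \<le> m * C" using size by (simp add: C algebra_simps)
  also have "\<dots> \<le> n" unfolding m_def by (rule div_times_less_eq_dividend)
  finally have "card (sols t l \<phi>) \<le> growth (lang R r) l \<phi> n"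
    using card_sols_le_growth[OF t(1)] by (simp add: card_nodes)
  then have "card F \<le> growth (lang R r) l \<phi> n"
    using card_mono[OF finite_sols t(2)] by linarith
  then show ?thesis using t(3) by (simp add: m_def)
qed

end

theorem mainTheorem7:
  fixes \<Sigma> :: "'a set" and r :: 'a and R :: "'a rule set" and l :: nat and \<phi> :: "'a qf"
  assumes "tree_grammar \<Sigma> r R"
    and "qf_type (lang R r) l \<phi>"
    and "\<exists>t\<in>lang R r. \<exists>vs\<in>tuples t l. sat t vs \<phi>"
  shows "\<exists>X \<subseteq> {..<l}.
     (\<forall>t\<in>lang R r. \<forall>vs\<in>sols t l \<phi>. \<forall>ws\<in>sols t l \<phi>.
         (\<forall>i\<in>X. vs ! i = ws ! i) \<longrightarrow> vs = ws) \<and>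
     (\<lambda>n. real (growth (lang R r) l \<phi> n)) \<in> \<Theta>(\<lambda>n. real n ^ card X)"
proof -
  obtain t0 vs0 where "t0 \<in> lang R r" "vs0 \<in> sols t0 l \<phi>" using assms(3) by (auto simp: sols_def)
  then interpret qf_type_witness R r l \<phi> t0 vs0 using assms(2) by unfold_locales
  obtain X where X: "X \<subseteq> {..<l}" and det: "\<forall>i<l. determined X (Var i)"
    and minimal: "\<forall>i\<in>X. \<not> determined (X - {i}) (Var i)"
    by (rule minimal_determining_set)
  obtain P A G where "\<And>i. i \<in> X \<Longrightarrow> isolating X i (P i) (A i) (G i)"
    using isolating_choice[OF X minimal] by blast
  then interpret isolating_runs R r l \<phi> t0 vs0 X P A G using X by unfold_locales
  define C where "C = (card X + 1) * num_nodes t0"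
  have uniq: "\<forall>t\<in>lang R r. \<forall>vs\<in>sols t l \<phi>. \<forall>ws\<in>sols t l \<phi>. (\<forall>i\<in>X. vs ! i = ws ! i) \<longrightarrow> vs = ws"
    by (rule solutions_agree[OF X det])
  have "growth (lang R r) l \<phi> n \<le> n ^ card X" for n
    using card_sols_le[OF _ X] uniq by (intro growth_le) blast
  moreover have "0 < C" using num_nodes_pos[of t0] by (simp add: C_def)
  ultimately have "(\<lambda>n. real (growth (lang R r) l \<phi> n)) \<in> \<Theta>(\<lambda>n. real n ^ card X)"
    using growth_lower_bound[OF C_def] by (rule bigtheta_power_if_bounds)
  then show ?thesis using X uniq by blast
qed

end
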